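(* Let $s,s'\in\{0,1\}^{\mathcal{M}_d}$ be such that $p_s,p_{s'}$ are hyperbolic with respect to $\mathbf{1}$, and let $$0<\epsilon<\frac{1}{4n^{d(n-d)}Nd\sqrt{n}}.$$ Then $$\mathrm{hdist}(K_{p_s},K_{p_{s'}})\ge\frac{\|\Lambda(p_s)-\Lambda(p_{s'})\|_\infty}{18n^{d(n-d)}Nn}.$$
   Context: Let $n\ge 2d\ge 2$, $\mathbf{1}=(1,\dots,1)\in\mathbb{R}^n$, and $e_d(x)=\sum_{|S|=d}\prod_{i\in S}x_i$. A $d$-matching on $[n]$ is a set of $d$ pairwise disjoint $2$-element subsets of $[n]$; for such $M$, $q_M(x)=\prod_{\{i,j\}\in M,\,i<j}(x_i-x_j)$. $M$ fully crosses a $d$-subset $S$ if every edge of $M$ has exactly one endpoint in $S$. Fix a set $\mathcal{M}_d$ of $d$-matchings and a set $\mathcal{S}_d$ of $d$-subsets of $[n]$ such that every $S\in\mathcal{S}_d$ is fully crossed by exactly one $M\in\mathcal{M}_d$ and every $M\in\mathcal{M}_d$ fully crosses at least one $S\in\mathcal{S}_d$; $N=|\mathcal{M}_d|$. For $s\in\{0,1\}^{\mathcal{M}_d}$, $p_s=e_d-\epsilon\sum_Ms_Mq_M$. A homogeneous $p$ is hyperbolic w.r.t. $\mathbf{1}$ if $p(\mathbf{1})\neq0$ and $t\mapsto p(t\mathbf{1}+x)$ is real-rooted for all $x$; its hyperbolicity cone is $K_p=\{x:\text{all roots of }p(t\mathbf{1}+x)\text{ are }\le 0\}$. $\Lambda(p)=(\lambda_{\max}(p(t\mathbf{1}+\mathbf{1}_S)))_{S\in\mathcal{S}_d}$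 with $\lambda_{\max}$ the largest root in $t$. $\mathrm{hdist}(K,K')=\max(\sup_{x\in\mathcal{B}\cap K}d(x,K'),\sup_{y\in\mathcal{B}\cap K'}d(y,K))$ with $\mathcal{B}$ the Euclidean unit ball. *)

theory Defs
  imports "HOL-Analysis.Analysis"
begin

text \<open>Coordinates are indexed by a finite linearly ordered type 'n (playing the role of [n],
  n = CARD('n)); the order is needed to orient edges in q_M.\<close>

definition all_ones :: "'a::one ^ 'n" where
  "all_ones = (\<chi> i. 1)"

definition ind_vec :: "'n set \<Rightarrow> real ^ 'n" where
  "ind_vec S = (\<chi> i. if i \<in> S then 1 else 0)"

definition esym :: "nat \<Rightarrow> 'a::comm_ring_1 ^ 'n::finite \<Rightarrow> 'a" where
  "esym d x = (\<Sum>S\<in>{S. card S = d}. \<Prod>i\<in>S. x $ i)"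

definition is_matching :: "nat \<Rightarrow> 'n::finite set set \<Rightarrow> bool" where
  "is_matching d M \<longleftrightarrow> card M = d \<and> (\<forall>e\<in>M. card e = 2)
     \<and> (\<forall>e\<in>M. \<forall>f\<in>M. e \<noteq> f \<longrightarrow> e \<inter> f = {})"

definition qM :: "('n::{finite,linorder}) set set \<Rightarrow> 'a::comm_ring_1 ^ ('n::{finite,linorder}) \<Rightarrow> 'a" where
  "qM M x = (\<Prod>e\<in>M. x $ (Min e) - x $ (Max e))"

definition fully_crosses :: "'n set set \<Rightarrow> 'n set \<Rightarrow> bool" where
  "fully_crosses M S \<longleftrightarrow> (\<forall>e\<in>M. card (e \<inter> S) = 1)"

definition ps :: "nat \<Rightarrow> real \<Rightarrow> ('n::{finite,linorder}) set set set \<Rightarrow> ('n set set \<Rightarrow> bool)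
     \<Rightarrow> 'a::{real_algebra_1,comm_ring_1} ^ ('n::{finite,linorder}) \<Rightarrow> 'a" where
  "ps d eps Ms s x = esym d x - of_real eps * (\<Sum>M\<in>Ms. (if s M then qM M x else 0))"

definition hyperbolic :: "(complex ^ 'n \<Rightarrow> complex) \<Rightarrow> bool" where
  "hyperbolic p \<longleftrightarrow> p all_ones \<noteq> 0 \<and>
     (\<forall>x::real ^ 'n. \<forall>z::complex. p (\<chi> i. z + complex_of_real (x $ i)) = 0 \<longrightarrow> z \<in> \<real>)"

definition hcone :: "(real ^ 'n \<Rightarrow> real) \<Rightarrow> (real ^ 'n) set" where
  "hcone p = {x. \<forall>t::real. p (t *\<^sub>R all_ones + x) = 0 \<longrightarrow> t \<le> 0}"

definition lambda_max :: "(real ^ 'n \<Rightarrow> real) \<Rightarrow> real ^ 'n \<Rightarrow> real" where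
  "lambda_max p x = Max {t::real. p (t *\<^sub>R all_ones + x) = 0}"

definition Lambda_dist :: "'n set set \<Rightarrow> (real ^ 'n \<Rightarrow> real) \<Rightarrow> (real ^ 'n \<Rightarrow> real) \<Rightarrow> real" where
  "Lambda_dist Ss p p' = Max (insert 0 ((\<lambda>S. \<bar>lambda_max p (ind_vec S) - lambda_max p' (ind_vec S)\<bar>) ` Ss))"

definition hdist :: "(real ^ 'n) set \<Rightarrow> (real ^ 'n) set \<Rightarrow> real" where
  "hdist K K' = max (SUP x \<in> cball 0 1 \<inter> K. infdist x K') (SUP y \<in> cball 0 1 \<inter> K'. infdist y K)"

end

theory Submission
  imports Defs "HOL-Computational_Algebra.Fundamental_Theorem_Algebra"
begin

text \<open>For \<open>S \<in> Ss\<close> crossed by \<open>M \<in> Ms\<close>, every other \<open>q_M'\<close> vanishes on the line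
  \<open>t \<one> + \<one>_S\<close>, and \<open>p_s\<close> restricts there to \<open>g(t) - c_s\<close>, where \<open>g(t)\<close> is \<open>e_d\<close> of a vector
  with \<open>d\<close> entries \<open>t + 1\<close> and \<open>n - d\<close> entries \<open>t\<close>, and \<open>c_s \<in> {0, \<plusminus>eps}\<close>. So
  \<open>\<Lambda>(p_s)_S\<close> is the largest root of \<open>g = c_s\<close>. Where \<open>g\<close> is close to \<open>0\<close> on \<open>[-1, 0]\<close> its slope is
  bounded below, so changing \<open>c_s\<close> to \<open>c_s'\<close> moves that root by at most a multiple of
  \<open>|c_s - c_s'|\<close>. Conversely the point \<open>\<Lambda>(p_s)_S \<one> + \<one>_S\<close>, scaled into the unit ball, lies in
  \<open>K_{p_s}\<close>, while \<open>p_s'\<close> is negative there, of size comparable to \<open>|c_s - c_s'|\<close>; as \<open>p_s'\<close>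
  is nonnegative on its cone and Lipschitz on the unit ball, the point is correspondingly far from
  \<open>K_{p_s'}\<close>.\<close>

definition esym_two_valued :: "nat \<Rightarrow> nat \<Rightarrow> nat \<Rightarrow> 'a::comm_ring_1 \<Rightarrow> 'a \<Rightarrow> 'a" where
  "esym_two_valued d m k a b = (\<Sum>j\<le>k. of_nat ((d choose j) * (m choose (k - j))) * a^j * b^(k-j))"

definition esym_line :: "nat \<Rightarrow> nat \<Rightarrow> nat \<Rightarrow> real \<Rightarrow> real" where
  "esym_line d m k t = esym_two_valued d m k (t+1) t"

lemma Suc_mult_choose_Suc: "Suc i * (d choose Suc i) = (d - i) * (d choose i)"
  by (metis binomial_absorb_comp binomial_absorption)

lemma esym_line_derivative_coeff:
  assumes "i \<le> k'"
  shows "Suc i * (d choose Suc i) * (m choose (k' - i)) + (d choose i) * (m choose (Suc k' - i)) * (Suc k' - i)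
     = (d + m - k') * ((d choose i) * (m choose (k' - i)))"
proof -
  define j where "j = k' - i"
  have sk: "Suc k' - i = Suc j" using assms j_def by auto
  have e1: "Suc j * (m choose Suc j) = (m - j) * (m choose j)" by (rule Suc_mult_choose_Suc)
  have p1: "Suc i * (d choose Suc i) * (m choose (k' - i)) = (d - i) * (d choose i) * (m choose j)"
    by (simp only: Suc_mult_choose_Suc j_def)
  have p2: "(d choose i) * (m choose (Suc k' - i)) * (Suc k' - i) = (d choose i) * ((m - j) * (m choose j))"
    unfolding sk e1[symmetric] by (simp add: algebra_simps)
  have "Suc i * (d choose Suc i) * (m choose (k' - i)) + (d choose i) * (m choose (Suc k' - i)) * (Suc k' - i)
      = (d - i) * (d choose i) * (m choose j) + (d choose i) * ((m - j) * (m choose j))"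
    unfolding p1 p2 ..
  also have "\<dots> = (d + m - k') * ((d choose i) * (m choose j))"
  proof (cases "i \<le> d \<and> j \<le> m")
    case True
    then have "d - i + (m - j) = d + m - k'" using assms j_def by auto
    then show ?thesis by (metis (no_types, lifting) add_mult_distrib mult.assoc mult.left_commute)
  next
    case False
    then show ?thesis by auto
  qed
  finally show ?thesis unfolding j_def .
qed

lemma esym_line_derivative_sum:
  assumes "k = Suc k'"
  shows "(\<Sum>j\<le>k. real ((d choose j) * (m choose (k - j))) * (real j * (t+1)^(j-1) * t^(k-j) + (t+1)^j * (real (k-j) * t^(k-j-1))))
      = real (d + m - k') * esym_line d m k' t"
proof -
  define c where "c j = real ((d choose j) * (m choose (k - j)))" for j
  have A: "(\<Sum>j\<le>k. c j * (real j * (t+1)^(j-1) * t^(k-j)))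
     = (\<Sum>i\<le>k'. real (Suc i * (d choose Suc i) * (m choose (k' - i))) * (t+1)^i * t^(k'-i))"
    unfolding assms sum.atMost_Suc_shift by (simp add: c_def algebra_simps assms)
  have B: "(\<Sum>j\<le>k. c j * ((t+1)^j * (real (k-j) * t^(k-j-1))))
     = (\<Sum>i\<le>k'. real ((d choose i) * (m choose (Suc k' - i)) * (Suc k' - i)) * (t+1)^i * t^(k'-i))"
  proof -
    have "(\<Sum>j\<le>k. c j * ((t+1)^j * (real (k-j) * t^(k-j-1))))
       = (\<Sum>j\<le>k'. c j * ((t+1)^j * (real (k-j) * t^(k-j-1))))"
      unfolding assms sum.atMost_Suc by simp
    also have "\<dots> = (\<Sum>i\<le>k'. real ((d choose i) * (m choose (Suc k' - i)) * (Suc k' - i)) * (t+1)^i * t^(k'-i))"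
    proof (rule sum.cong[OF refl])
      fix x assume x: "x \<in> {..k'}"
      then have e: "k - x = Suc k' - x" "k - x - 1 = k' - x" using assms by auto
      show "c x * ((t+1)^x * (real (k-x) * t^(k-x-1))) = real ((d choose x) * (m choose (Suc k' - x)) * (Suc k' - x)) * (t+1)^x * t^(k'-x)"
        unfolding c_def e of_nat_mult by (simp add: mult_ac)
    qed
    finally show ?thesis .
  qed
  have "(\<Sum>j\<le>k. c j * (real j * (t+1)^(j-1) * t^(k-j) + (t+1)^j * (real (k-j) * t^(k-j-1))))
      = (\<Sum>j\<le>k. c j * (real j * (t+1)^(j-1) * t^(k-j))) + (\<Sum>j\<le>k. c j * ((t+1)^j * (real (k-j) * t^(k-j-1))))"
    by (simp add: distrib_left sum.distrib)
  also have "\<dots> = (\<Sum>i\<le>k'. real (Suc i * (d choose Suc i) * (m choose (k' - i)) + (d choose i) * (m choose (Suc k' - i)) * (Suc k' - i)) * (t+1)^i * t^(k'-i))"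
    unfolding A B by (simp add: sum.distrib[symmetric] algebra_simps)
  also have "\<dots> = (\<Sum>i\<le>k'. real (d + m - k') * (real ((d choose i) * (m choose (k' - i))) * (t+1)^i * t^(k'-i)))"
  proof (rule sum.cong[OF refl])
    fix i assume "i \<in> {..k'}"
    then have "Suc i * (d choose Suc i) * (m choose (k' - i)) + (d choose i) * (m choose (Suc k' - i)) * (Suc k' - i)
      = (d + m - k') * ((d choose i) * (m choose (k' - i)))" by (intro esym_line_derivative_coeff) auto
    then show "real (Suc i * (d choose Suc i) * (m choose (k' - i)) + (d choose i) * (m choose (Suc k' - i)) * (Suc k' - i)) * (t+1)^i * t^(k'-i)
      = real (d + m - k') * (real ((d choose i) * (m choose (k' - i))) * (t+1)^i * t^(k'-i))"
      by (simp only: of_nat_mult mult.assoc)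
  qed
  also have "\<dots> = real (d + m - k') * esym_line d m k' t"
    by (simp add: esym_line_def esym_two_valued_def sum_distrib_left)
  finally show ?thesis by (simp only: c_def)
qed

lemma esym_line_has_real_derivative:
  assumes "k = Suc k'"
  shows "((esym_line d m k) has_real_derivative (real (d + m - k') * esym_line d m k' t)) (at t)"
proof -
  define c where "c j = real ((d choose j) * (m choose (k - j)))" for j
  have "esym_line d m k = (\<lambda>t. \<Sum>j\<le>k. c j * (t+1)^j * t^(k-j))"
    by (auto simp: esym_line_def esym_two_valued_def c_def fun_eq_iff)
  moreover have "((\<lambda>t. \<Sum>j\<le>k. c j * (t+1)^j * t^(k-j)) has_real_derivative
      (\<Sum>j\<le>k. c j * (real j * (t+1)^(j-1) * t^(k-j) + (t+1)^j * (real (k-j) * t^(k-j-1))))) (at t)"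
    by (auto intro!: derivative_eq_intros DERIV_sum simp: algebra_simps)
  ultimately show ?thesis using esym_line_derivative_sum[OF assms, of d m t] by (simp add: c_def)
qed

lemma esym_two_valued_recurrence_coeff:
  assumes dm: "d \<le> m" and i: "i \<le> Suc d"
  shows "(if 1 \<le> i \<and> i \<le> d then real (m+1) * real (d choose (i-1)) * real (m choose (d-i)) else 0)
    = (if i \<le> d then (real d - real m) * real (d choose i) * real (m choose (d-i)) else 0)
      + real (d+1) * real (d choose i) * real (m choose (Suc d - i))"
proof -
  consider "i = 0" | "i = Suc d" | "1 \<le> i \<and> i \<le> d" using i by linarith
  then show ?thesis
  proof cases
    case 1
    have "Suc d * (m choose Suc d) = (m - d) * (m choose d)" by (rule Suc_mult_choose_Suc)
    then have "real (Suc d) * real (m choose Suc d) = (real m - real d) * real (m choose d)"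
      using dm by (metis of_nat_diff of_nat_mult)
    then show ?thesis using 1 by (simp add: algebra_simps)
  next
    case 2
    then show ?thesis by simp
  next
    case 3
    then obtain i' where i': "i = Suc i'" by (cases i) auto
    define X where "X = real (d choose i')"
    define Y where "Y = real (m choose (d - i))"
    define p where "p = real i"
    define q where "q = real (d + 1 - i)"
    have pq: "p > 0" "q > 0" using 3 by (auto simp: p_def q_def)
    have q2: "q = real d + 1 - p" using 3 by (simp add: p_def q_def of_nat_diff)
    have "Suc i' * (d choose Suc i') = (d - i') * (d choose i')" by (rule Suc_mult_choose_Suc)
    then have h1: "p * real (d choose i) = q * X"
      unfolding p_def q_def X_def i' by (metis Suc_eq_plus1 diff_Suc_Suc of_nat_mult)
    have sd: "Suc d - i = Suc (d - i)" using 3 by auto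
    have "Suc (d - i) * (m choose Suc (d - i)) = (m - (d - i)) * (m choose (d - i))" by (rule Suc_mult_choose_Suc)
    then have eq: "real (Suc (d - i)) * real (m choose Suc (d - i)) = real (m - (d - i)) * Y"
      unfolding Y_def by (metis of_nat_mult)
    have e1: "real (m - (d - i)) = real m - real d + p" using 3 dm by (simp add: p_def of_nat_diff)
    have e2: "real (Suc (d - i)) = q" using 3 by (simp add: q_def Suc_diff_le)
    have h2: "q * real (m choose (Suc d - i)) = (real m - real d + p) * Y"
      using eq unfolding e1 e2 sd .
    have c1: "real (d choose i) = q * X / p" using h1 pq by (simp add: field_simps)
    have c2: "real (m choose (Suc d - i)) = (real m - real d + p) * Y / q" using h2 pq by (simp add: field_simps)
    have "real (m+1) * X * Y = (real d - real m) * (q * X / p) * Y + real (d+1) * (q * X / p) * ((real m - real d + p) * Y / q)"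
    proof -
      have key: "(real m + 1) * p = (real d - real m) * q + (real d + 1) * (real m - real d + p)"
        unfolding q2 by (simp add: algebra_simps)
      have "(real d - real m) * (q * X / p) * Y + real (d+1) * (q * X / p) * ((real m - real d + p) * Y / q)
          = X * Y / p * ((real d - real m) * q + (real d + 1) * (real m - real d + p))"
        using pq by (simp add: field_simps)
      also have "\<dots> = real (m+1) * X * Y" unfolding key[symmetric] using pq by simp
      finally show ?thesis by simp
    qed
    then have prev: "real (m+1) * X * Y = (real d - real m) * (q * X / p) * Y + real (d+1) * (q * X / p) * ((real m - real d + p) * Y / q)" .
    have im: "i - 1 = i'" using i' by simp
    have main: "real (m+1) * real (d choose (i-1)) * real (m choose (d-i)) = (real d - real m) * real (d choose i) * real (m choose (d-i)) + real (d+1) * real (d choose i) * real (m choose (Suc d - i))"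
    proof -
      have "real (m+1) * real (d choose (i-1)) * real (m choose (d-i)) = real (m+1) * X * Y"
        by (simp only: X_def Y_def im)
      also note prev
      also have "(real d - real m) * (q * X / p) * Y + real (d+1) * (q * X / p) * ((real m - real d + p) * Y / q)
         = (real d - real m) * real (d choose i) * real (m choose (d-i)) + real (d+1) * real (d choose i) * real (m choose (Suc d - i))"
        by (simp only: c1 c2 Y_def)
      finally show ?thesis .
    qed
    show ?thesis using 3 main by simp
  qed
qed

lemma esym_two_valued_recurrence:
  fixes a b :: real
  assumes d1: "1 \<le> d" and dm: "d \<le> m"
  shows "real (m+1) * a * b * esym_two_valued d m (d-1) a b = (real d - real m) * b * esym_two_valued d m d a b + real (d+1) * esym_two_valued d m (d+1) a b"
proof -
  obtain d' where d': "d = Suc d'" using d1 by (cases d) auto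
  define L where "L i = (if 1 \<le> i \<and> i \<le> d then real (m+1) * real (d choose (i-1)) * real (m choose (d-i)) else 0)" for i
  define R1 where "R1 i = (if i \<le> d then (real d - real m) * real (d choose i) * real (m choose (d-i)) else 0)" for i
  define R2 where "R2 i = real (d+1) * real (d choose i) * real (m choose (Suc d - i))" for i
  have a: "real (m+1) * a * b * esym_two_valued d m (d-1) a b = (\<Sum>i\<le>Suc d. L i * a^i * b^(Suc d - i))"
  proof -
    have "(\<Sum>i\<le>Suc d. L i * a^i * b^(Suc d - i)) = (\<Sum>j\<le>d. L (Suc j) * a^(Suc j) * b^(d - j))"
      unfolding sum.atMost_Suc_shift by (simp add: L_def)
    also have "\<dots> = (\<Sum>j\<le>d'. L (Suc j) * a^(Suc j) * b^(d - j))"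
      unfolding d' sum.atMost_Suc by (simp add: L_def d')
    also have "\<dots> = (\<Sum>j\<le>d'. real (m+1) * a * b * (real ((d choose j) * (m choose (d' - j))) * a^j * b^(d'-j)))"
    proof (rule sum.cong[OF refl])
      fix j assume j: "j \<in> {..d'}"
      then have e: "d - j = Suc (d' - j)" "d - Suc j = d' - j" using d' by auto
      show "L (Suc j) * a^(Suc j) * b^(d - j) = real (m+1) * a * b * (real ((d choose j) * (m choose (d' - j))) * a^j * b^(d'-j))"
        using j unfolding L_def e by (simp add: d' mult_ac)
    qed
    also have "\<dots> = real (m+1) * a * b * esym_two_valued d m (d-1) a b"
      by (simp add: esym_two_valued_def sum_distrib_left d')
    finally show ?thesis by simp
  qed
  have b: "(real d - real m) * b * esym_two_valued d m d a b = (\<Sum>i\<le>Suc d. R1 i * a^i * b^(Suc d - i))"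
  proof -
    have "(\<Sum>i\<le>Suc d. R1 i * a^i * b^(Suc d - i)) = (\<Sum>i\<le>d. R1 i * a^i * b^(Suc d - i))"
      unfolding sum.atMost_Suc by (simp add: R1_def)
    also have "\<dots> = (\<Sum>i\<le>d. (real d - real m) * b * (real ((d choose i) * (m choose (d - i))) * a^i * b^(d-i)))"
    proof (rule sum.cong[OF refl])
      fix i assume i: "i \<in> {..d}"
      then have e: "Suc d - i = Suc (d - i)" by auto
      show "R1 i * a^i * b^(Suc d - i) = (real d - real m) * b * (real ((d choose i) * (m choose (d - i))) * a^i * b^(d-i))"
        using i unfolding R1_def e by (simp add: mult_ac)
    qed
    also have "\<dots> = (real d - real m) * b * esym_two_valued d m d a b"
      by (simp add: esym_two_valued_def sum_distrib_left)
    finally show ?thesis by simp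
  qed
  have c: "real (d+1) * esym_two_valued d m (d+1) a b = (\<Sum>i\<le>Suc d. R2 i * a^i * b^(Suc d - i))"
    unfolding esym_two_valued_def R2_def sum_distrib_left Suc_eq_plus1 by (rule sum.cong) (simp_all add: mult_ac)
  have "(\<Sum>i\<le>Suc d. L i * a^i * b^(Suc d - i)) = (\<Sum>i\<le>Suc d. R1 i * a^i * b^(Suc d - i)) + (\<Sum>i\<le>Suc d. R2 i * a^i * b^(Suc d - i))"
    unfolding sum.distrib[symmetric]
  proof (rule sum.cong[OF refl])
    fix i assume "i \<in> {..Suc d}"
    then have "L i = R1 i + R2 i" unfolding L_def R1_def R2_def by (intro esym_two_valued_recurrence_coeff dm) auto
    then show "L i * a^i * b^(Suc d - i) = R1 i * a^i * b^(Suc d - i) + R2 i * a^i * b^(Suc d - i)"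
      by (simp add: algebra_simps)
  qed
  then show ?thesis unfolding a b c .
qed

lemma esym_line_at_0: "esym_line d m d 0 = 1"
proof -
  have "esym_line d m d 0 = (\<Sum>j\<in>insert d {..<d}. real ((d choose j) * (m choose (d - j))) * (0+1)^j * 0^(d-j))"
    unfolding esym_line_def esym_two_valued_def by (intro sum.cong) auto
  also have "\<dots> = 1" by (subst sum.insert) (auto intro!: sum.neutral)
  finally show ?thesis .
qed

lemma esym_line_Suc_at_0: "esym_line d m (Suc d) 0 = 0"
  unfolding esym_line_def esym_two_valued_def by (intro sum.neutral) (auto simp: le_Suc_eq)

lemma esym_line_0: "esym_line d m 0 t = 1"
  unfolding esym_line_def esym_two_valued_def by simp

lemma power_le_esym_line:
  assumes "0 \<le> t" shows "(t+1)^d \<le> esym_line d m d t"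
proof -
  have "(t+1)^d = real ((d choose d) * (m choose (d - d))) * (t+1)^d * t^(d-d)" by simp
  also have "\<dots> \<le> (\<Sum>j\<le>d. real ((d choose j) * (m choose (d - j))) * (t+1)^j * t^(d-j))"
    by (rule member_le_sum[where i=d and f="\<lambda>j. real ((d choose j) * (m choose (d - j))) * (t+1)^j * t^(d-j)"])
       (use assms in auto)
  finally show ?thesis by (simp add: esym_line_def esym_two_valued_def)
qed

lemma one_le_esym_line:
  assumes "0 \<le> t" shows "1 \<le> esym_line d m d t"
proof -
  have "1 \<le> (t + 1) ^ d" using assms by (intro one_le_power) simp
  then show ?thesis using power_le_esym_line[OF assms, of d m] by linarith
qed

lemma one_le_abs_esym_line:
  assumes dm: "d \<le> m" and t: "t \<le> -1" shows "1 \<le> \<bar>esym_line d m d t\<bar>"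
proof -
  have tm: "(-1)^d * (real ((d choose j) * (m choose (d - j))) * (t+1)^j * t^(d-j))
      = real ((d choose j) * (m choose (d - j))) * \<bar>t+1\<bar>^j * \<bar>t\<bar>^(d-j)" if "j \<le> d" for j
  proof -
    have "(t+1)^j = (-1)^j * \<bar>t+1\<bar>^j" using t by (simp add: power_mult_distrib[symmetric] add.commute)
    moreover have "t^(d-j) = (-1)^(d-j) * \<bar>t\<bar>^(d-j)" using t by (simp add: power_mult_distrib[symmetric])
    moreover have "(-1::real)^d * ((-1)^j * (-1)^(d-j)) = 1"
      using that by (simp add: power_add[symmetric])
    ultimately show ?thesis by (simp add: algebra_simps)
  qed
  have "1 \<le> real (m choose d)" using dm by (simp add: Suc_leI)
  also have "\<dots> \<le> real ((d choose 0) * (m choose (d - 0))) * \<bar>t+1\<bar>^0 * \<bar>t\<bar>^(d-0)"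
  proof -
    have "1 \<le> \<bar>t\<bar>^d" using t by (intro one_le_power) auto
    then have "real (m choose d) * 1 \<le> real (m choose d) * \<bar>t\<bar>^d" by (intro mult_left_mono) auto
    then show ?thesis by simp
  qed
  also have "\<dots> \<le> (\<Sum>j\<le>d. real ((d choose j) * (m choose (d - j))) * \<bar>t+1\<bar>^j * \<bar>t\<bar>^(d-j))"
    by (rule member_le_sum[where i=0 and f="\<lambda>j. real ((d choose j) * (m choose (d - j))) * \<bar>t+1\<bar>^j * \<bar>t\<bar>^(d-j)"]) auto
  also have "\<dots> = (-1)^d * esym_line d m d t"
    unfolding esym_line_def esym_two_valued_def sum_distrib_left by (rule sum.cong[OF refl], subst tm, auto)
  also have "\<dots> \<le> \<bar>esym_line d m d t\<bar>" using abs_ge_self[of "(-1::real)^d * esym_line d m d t"] by (simp add: abs_mult)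
  finally show ?thesis .
qed

definition half_radius :: "nat \<Rightarrow> nat \<Rightarrow> real" where
  "half_radius d m = 1 / (2 * (real d + real ((d + m) choose d)))"

lemma half_radius_pos: "1 \<le> d \<Longrightarrow> 0 < half_radius d m" by (simp add: half_radius_def)

lemma half_radius_le: "1 \<le> d \<Longrightarrow> half_radius d m \<le> 1/4"
proof -
  assume d: "1 \<le> d"
  have "1 \<le> real ((d + m) choose d)" by (simp add: Suc_leI)
  then have "4 \<le> 2 * (real d + real ((d + m) choose d))" using d by simp
  then show ?thesis unfolding half_radius_def by (simp add: field_simps)
qed

lemma esym_line_ge_half:
  assumes d: "1 \<le> d" and t: "- half_radius d m \<le> t" "t \<le> 0"
  shows "1/2 \<le> esym_line d m d t"
proof -
  define C where "C = real ((d + m) choose d)"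
  define c where "c j = real ((d choose j) * (m choose (d - j)))" for j
  have sumc: "(\<Sum>j\<le>d. c j) = C" unfolding c_def C_def of_nat_sum[symmetric]
    using vandermonde[of d m d] by simp
  have d4: "half_radius d m \<le> 1/4" using half_radius_le[OF d] .
  have at: "\<bar>t\<bar> \<le> half_radius d m" using t by simp
  have t1: "-1 \<le> t" using t d4 by simp
  have "1 + real d * t \<le> (1 + t)^d" using Bernoulli_inequality[OF t1] .
  then have main: "1 - real d * \<bar>t\<bar> \<le> (t+1)^d" using t by (simp add: add.commute)
  have small: "\<bar>c j * (t+1)^j * t^(d-j)\<bar> \<le> c j * \<bar>t\<bar>" if "j < d" for j
  proof -
    have "\<bar>t+1\<bar>^j \<le> 1" using t t1 by (intro power_le_one) auto
    moreover have "\<bar>t\<bar>^(d-j) \<le> \<bar>t\<bar>"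
    proof -
      have "\<bar>t\<bar>^(d-j) = \<bar>t\<bar> * \<bar>t\<bar>^(d-j-1)" using that by (metis Suc_diff_Suc diff_Suc_1 power_Suc zero_less_diff)
      also have "\<dots> \<le> \<bar>t\<bar> * 1" using t t1 by (intro mult_left_mono power_le_one) auto
      finally show ?thesis by simp
    qed
    moreover have "0 \<le> c j" by (simp add: c_def)
    ultimately have "c j * (\<bar>t+1\<bar>^j * \<bar>t\<bar>^(d-j)) \<le> c j * (1 * \<bar>t\<bar>)"
      by (intro mult_left_mono mult_mono) auto
    then show ?thesis using \<open>0 \<le> c j\<close> by (simp add: abs_mult power_abs mult.assoc)
  qed
  have "esym_line d m d t = (\<Sum>j\<in>insert d {..<d}. c j * (t+1)^j * t^(d-j))"
    unfolding esym_line_def esym_two_valued_def c_def by (intro sum.cong) auto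
  also have "\<dots> = (t+1)^d + (\<Sum>j<d. c j * (t+1)^j * t^(d-j))"
    by (subst sum.insert) (auto simp: c_def)
  finally have Geq: "esym_line d m d t = (t+1)^d + (\<Sum>j<d. c j * (t+1)^j * t^(d-j))" .
  have "\<bar>\<Sum>j<d. c j * (t+1)^j * t^(d-j)\<bar> \<le> (\<Sum>j<d. c j * \<bar>t\<bar>)"
    by (rule order_trans[OF sum_abs]) (intro sum_mono small, simp)
  also have "\<dots> \<le> (\<Sum>j\<le>d. c j) * \<bar>t\<bar>"
    unfolding sum_distrib_right[symmetric] by (intro mult_right_mono sum_mono2) (auto simp: c_def)
  also have "\<dots> = C * \<bar>t\<bar>" by (simp add: sumc)
  finally have tail: "\<bar>\<Sum>j<d. c j * (t+1)^j * t^(d-j)\<bar> \<le> C * \<bar>t\<bar>" .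
  have "(real d + C) * \<bar>t\<bar> \<le> (real d + C) * half_radius d m"
    using at by (intro mult_left_mono) (auto simp: C_def)
  also have "\<dots> = 1/2" using d unfolding half_radius_def C_def by (simp add: field_simps)
  finally have "(real d + C) * \<bar>t\<bar> \<le> 1/2" .
  then show ?thesis using Geq main tail by (simp add: algebra_simps abs_le_iff)
qed

definition esym_line_poly :: "nat \<Rightarrow> nat \<Rightarrow> nat \<Rightarrow> 'a::comm_ring_1 poly" where
  "esym_line_poly d m k = (\<Sum>j\<le>k. smult (of_nat ((d choose j) * (m choose (k - j)))) ([:1,1:]^j * [:0,1:]^(k-j)))"

lemma poly_esym_line_poly: "poly (esym_line_poly d m k) x = esym_two_valued d m k (x+1) x"
  unfolding esym_line_poly_def esym_two_valued_def by (simp add: poly_sum mult_ac add.commute)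

lemma continuous_on_esym_line: "continuous_on A (esym_line d m k)"
  unfolding esym_line_def esym_two_valued_def by (intro continuous_intros)

lemma esym_line_top_has_real_derivative:
  assumes "1 \<le> d"
  shows "((esym_line d m d) has_real_derivative (real (m+1) * esym_line d m (d-1) w)) (at w)"
proof -
  obtain d' where d': "d = Suc d'" using assms by (cases d) auto
  have "d + m - d' = m + 1" using d' by simp
  then show ?thesis using esym_line_has_real_derivative[where k=d and k'=d' and d=d and m=m and t=w] d' by simp
qed

lemma esym_line_Suc_has_real_derivative:
  "((esym_line d m (Suc d)) has_real_derivative (real m * esym_line d m d w)) (at w)"
  using esym_line_has_real_derivative[where k="Suc d" and k'=d and d=d and m=m and t=w] by simp

lemma esym_line_Suc_at_neg_half_radius:
  assumes d1: "1 \<le> d"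
  shows "esym_line d m (Suc d) (- half_radius d m) \<le> - (real m * half_radius d m / 2)"
proof -
  define h where "h = (\<lambda>v. esym_line d m (Suc d) v - real m / 2 * v)"
  have "h (- half_radius d m) \<le> h 0"
  proof (rule DERIV_nonneg_imp_increasing_open[of _ _ h])
    show "- half_radius d m \<le> 0" using half_radius_pos[OF d1, of m] by simp
    fix x assume x: "- half_radius d m < x" "x < 0"
    have "1/2 \<le> esym_line d m d x" using esym_line_ge_half[OF d1, of m x] x by simp
    then have "0 \<le> real m * esym_line d m d x - real m / 2"
      using mult_left_mono[of "1/2" "esym_line d m d x" "real m"] by simp
    moreover have "(h has_real_derivative (real m * esym_line d m d x - real m / 2)) (at x)"
      unfolding h_def by (auto intro!: derivative_eq_intros esym_line_Suc_has_real_derivative)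
    ultimately show "\<exists>y. (h has_real_derivative y) (at x) \<and> 0 \<le> y" by blast
  qed (unfold h_def, intro continuous_intros continuous_on_esym_line)
  then show ?thesis by (simp add: h_def esym_line_Suc_at_0)
qed

lemma esym_line_Suc_upper_bound:
  assumes d1: "1 \<le> d" and eps0: "0 \<le> eps"
    and w: "-1 < w" "w \<le> - half_radius d m"
    and ge: "\<And>v. w \<le> v \<Longrightarrow> v \<le> 0 \<Longrightarrow> -eps \<le> esym_line d m d v"
  shows "esym_line d m (Suc d) w \<le> - (real m * half_radius d m / 2) + real m * eps"
proof -
  define \<delta> where "\<delta> = half_radius d m"
  define h where "h = (\<lambda>v. esym_line d m (Suc d) v + real m * eps * v)"
  have "h w \<le> h (-\<delta>)"
  proof (rule DERIV_nonneg_imp_increasing_open[of _ _ h])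
    show "w \<le> - \<delta>" using w by (simp add: \<delta>_def)
    fix x assume x: "w < x" "x < -\<delta>"
    have "-eps \<le> esym_line d m d x" using ge[of x] x half_radius_pos[OF d1, of m] by (simp add: \<delta>_def)
    then have "0 \<le> real m * esym_line d m d x + real m * eps"
      using mult_left_mono[of "-eps" "esym_line d m d x" "real m"] by simp
    moreover have "(h has_real_derivative (real m * esym_line d m d x + real m * eps)) (at x)"
      unfolding h_def by (auto intro!: derivative_eq_intros esym_line_Suc_has_real_derivative)
    ultimately show "\<exists>y. (h has_real_derivative y) (at x) \<and> 0 \<le> y" by blast
  qed (unfold h_def, intro continuous_intros continuous_on_esym_line)
  moreover have "real m * eps * (-\<delta> - w) \<le> real m * eps"
    using w eps0 half_radius_pos[OF d1, of m] by (intro mult_left_le) (auto simp: \<delta>_def)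
  ultimately show ?thesis
    using esym_line_Suc_at_neg_half_radius[OF d1, of m] by (simp add: h_def \<delta>_def algebra_simps)
qed

text \<open>On the part of \<open>[-1, -half_radius d m]\<close> where \<open>esym_line d m d\<close> stays within \<open>eps\<close>
  of zero, the recurrence \<open>esym_two_valued_recurrence\<close> at \<open>(a, b) = (w + 1, w)\<close> expresses the
  derivative through the value of \<open>esym_line d m (Suc d)\<close>, which is bounded away from zero.\<close>
lemma esym_line_derivative_lower_bound:
  assumes d1: "1 \<le> d" and dm: "d \<le> m" and eps0: "0 \<le> eps"
    and epsb: "2 \<le> d \<Longrightarrow> eps \<le> half_radius d m / 8"
    and w: "-1 < w" "w \<le> - half_radius d m" and gw: "\<bar>esym_line d m d w\<bar> \<le> eps"
    and ge: "\<And>v. w \<le> v \<Longrightarrow> v \<le> 0 \<Longrightarrow> -eps \<le> esym_line d m d v"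
  shows "2 * real m * half_radius d m \<le> real (m+1) * esym_line d m (d-1) w"
proof (cases "d = 1")
  case True
  have "2 * real m * half_radius d m \<le> 2 * real m * (1/4)"
    using half_radius_le[OF d1] by (intro mult_left_mono) auto
  then show ?thesis using True by (simp add: esym_line_0)
next
  case False
  then have eb: "eps \<le> half_radius d m / 8" using d1 epsb by simp
  define \<delta> where "\<delta> = half_radius d m"
  define D where "D = real (m+1) * esym_line d m (d-1) w"
  have dpos: "0 < \<delta>" using half_radius_pos[OF d1] by (simp add: \<delta>_def)
  have hw: "esym_line d m (Suc d) w \<le> - (real m * \<delta> / 2) + real m * eps"
    using esym_line_Suc_upper_bound[OF d1 eps0 w ge] by (simp add: \<delta>_def)
  have idt: "D * (w + 1) * w = (real d - real m) * w * esym_line d m d w + real (d+1) * esym_line d m (Suc d) w"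
    using esym_two_valued_recurrence[OF d1 dm, of "w+1" w] by (simp add: esym_line_def D_def mult_ac)
  have A: "(real d - real m) * w * esym_line d m d w \<le> real m * eps"
  proof -
    have "\<bar>(real d - real m) * w * esym_line d m d w\<bar> \<le> real m * 1 * eps"
      unfolding abs_mult using dm w gw dpos by (intro mult_mono) (auto simp: \<delta>_def)
    then show ?thesis by simp
  qed
  have E: "real m * eps \<le> real m * \<delta> / 8"
    using eb mult_left_mono[of eps "\<delta> / 8" "real m"] by (simp add: \<delta>_def)
  have "real (d+1) * esym_line d m (Suc d) w \<le> real (d+1) * (- (real m * \<delta> / 2) + real m * \<delta> / 8)"
    using hw E by (intro mult_left_mono) linarith+
  also have "\<dots> = real (d+1) * (- (3/8) * (real m * \<delta>))" by (simp add: algebra_simps)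
  also have "\<dots> \<le> 2 * (- (3/8) * (real m * \<delta>))"
    using d1 dpos by (intro mult_right_mono_neg) auto
  finally have B: "real (d+1) * esym_line d m (Suc d) w \<le> - (3/4) * (real m * \<delta>)"
    by (simp add: mult_ac)
  have "real m * \<delta> / 2
      \<le> - ((real d - real m) * w * esym_line d m d w) - real (d+1) * esym_line d m (Suc d) w"
    using A B E mult_nonneg_nonneg[of "real m" \<delta>] dpos by linarith
  also have "\<dots> = - (D * (w + 1) * w)" by (simp add: idt)
  also have "\<dots> = D * ((w + 1) * - w)" by (simp add: algebra_simps)
  finally have key: "real m * \<delta> / 2 \<le> D * ((w + 1) * - w)" .
  have P: "0 < (w + 1) * - w" "(w + 1) * - w \<le> 1/4"
  proof -
    show "0 < (w + 1) * - w" using w dpos by (intro mult_pos_pos) (auto simp: \<delta>_def)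
    have "0 \<le> (w + 1/2)^2" by simp
    then show "(w + 1) * - w \<le> 1/4" by (simp add: power2_eq_square algebra_simps)
  qed
  have "0 < real m * \<delta> / 2" using d1 dm dpos by simp
  then have "0 < D" using key P(1) zero_less_mult_pos2[of D "(w + 1) * - w"] by linarith
  then have "D * ((w + 1) * - w) \<le> D * (1/4)" using P by (intro mult_left_mono) auto
  then show ?thesis using key by (simp add: D_def \<delta>_def)
qed

definition esym_line_roots :: "nat \<Rightarrow> nat \<Rightarrow> real \<Rightarrow> real set" where
  "esym_line_roots d m c = {t. esym_line d m d t = c}"

lemma finite_esym_line_roots:
  assumes "c \<noteq> 1" shows "finite (esym_line_roots d m c)"
proof -
  have "esym_line_roots d m c = {t. poly (esym_line_poly d m d - [:c:]) t = 0}"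
    by (auto simp: esym_line_roots_def poly_esym_line_poly esym_line_def)
  moreover have "esym_line_poly d m d - [:c:] \<noteq> (0::real poly)"
  proof
    assume "esym_line_poly d m d - [:c:] = (0::real poly)"
    then have "poly (esym_line_poly d m d - [:c:]) 0 = (0::real)" by simp
    then show False using assms esym_line_at_0[of d m] by (simp add: poly_esym_line_poly esym_line_def)
  qed
  ultimately show ?thesis by (metis poly_roots_finite)
qed

lemma esym_line_roots_bounds:
  assumes dm: "d \<le> m" and c: "\<bar>c\<bar> < 1" and t: "t \<in> esym_line_roots d m c"
  shows "-1 < t \<and> t < 0"
proof -
  have g: "esym_line d m d t = c" using t by (simp add: esym_line_roots_def)
  have "\<not> t \<le> -1" using one_le_abs_esym_line[OF dm, of t] g c by auto
  moreover have "\<not> 0 \<le> t" using one_le_esym_line[of t d m] g c by auto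
  ultimately show ?thesis by simp
qed

lemma Max_esym_line_roots:
  assumes d1: "1 \<le> d" and dm: "d \<le> m" and c: "\<bar>c\<bar> < 1/2" and ne: "esym_line_roots d m c \<noteq> {}"
  shows "Max (esym_line_roots d m c) \<in> esym_line_roots d m c"
    and "-1 < Max (esym_line_roots d m c)"
    and "Max (esym_line_roots d m c) < - half_radius d m"
    and "\<And>t. Max (esym_line_roots d m c) < t \<Longrightarrow> c < esym_line d m d t"
proof -
  have fin: "finite (esym_line_roots d m c)" using finite_esym_line_roots c by auto
  show mx: "Max (esym_line_roots d m c) \<in> esym_line_roots d m c" using Max_in[OF fin ne] .
  have rg: "-1 < Max (esym_line_roots d m c) \<and> Max (esym_line_roots d m c) < 0" using esym_line_roots_bounds[OF dm _ mx] c by auto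
  then show "-1 < Max (esym_line_roots d m c)" by simp
  have gm: "esym_line d m d (Max (esym_line_roots d m c)) = c" using mx by (simp add: esym_line_roots_def)
  show "Max (esym_line_roots d m c) < - half_radius d m"
  proof (rule ccontr)
    assume "\<not> Max (esym_line_roots d m c) < - half_radius d m"
    then have "1/2 \<le> esym_line d m d (Max (esym_line_roots d m c))" using rg by (intro esym_line_ge_half[OF d1]) auto
    then show False using gm c by auto
  qed
  fix t assume t: "Max (esym_line_roots d m c) < t"
  show "c < esym_line d m d t"
  proof (rule ccontr)
    assume "\<not> c < esym_line d m d t"
    then have le: "esym_line d m d t \<le> c" by simp
    have "t < 0"
    proof (rule ccontr)
      assume "\<not> t < 0"
      then have "1 \<le> esym_line d m d t" using one_le_esym_line by simp
      then show False using le c by simp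
    qed
    have "\<exists>x. t \<le> x \<and> x \<le> 0 \<and> esym_line d m d x = c"
      using le c esym_line_at_0[of d m] \<open>t < 0\<close> by (intro IVT' continuous_on_esym_line) auto
    then obtain x where x: "t \<le> x" "esym_line d m d x = c" by blast
    then have "x \<in> esym_line_roots d m c" by (simp add: esym_line_roots_def)
    then have "x \<le> Max (esym_line_roots d m c)" using fin by simp
    then show False using x t by simp
  qed
qed

text \<open>A crossing of \<open>c\<close> before \<open>b\<close> would have to be followed by a downward one before the
  next crossing.\<close>
lemma le_level_if_crossings_upward:
  fixes f f' :: "real \<Rightarrow> real"
  assumes der: "\<And>v. (f has_real_derivative f' v) (at v)"
    and fin: "finite {v. f v = c}"
    and a: "f a < c" and b: "a \<le> b" "f b = c"
    and up: "\<And>v. a \<le> v \<Longrightarrow> v \<le> b \<Longrightarrow> f v = c \<Longrightarrow> 0 < f' v"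
    and v: "a \<le> v" "v \<le> b"
  shows "f v \<le> c"
proof -
  have cont: "continuous_on A f" for A
    using der by (intro continuous_at_imp_continuous_on ballI DERIV_isCont) blast
  define Z where "Z = {z. f z = c \<and> a \<le> z \<and> z \<le> b}"
  have finZ: "finite Z" using fin by (rule rev_finite_subset) (auto simp: Z_def)
  have bZ: "b \<in> Z" using b by (simp add: Z_def)
  define z1 where "z1 = Min Z"
  have z1Z: "z1 \<in> Z" using Min_in[OF finZ] bZ unfolding z1_def by blast
  have below: "f u \<le> c" if u: "a \<le> u" "u \<le> z1" for u
  proof (rule ccontr)
    assume "\<not> f u \<le> c"
    then obtain x where x: "a \<le> x" "x \<le> u" "f x = c"
      using IVT'[of f a c u] a u cont by fastforce
    then have "x \<in> Z" using u z1Z by (simp add: Z_def)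
    then have "z1 \<le> x" using finZ unfolding z1_def by simp
    then have "x = u" using x(2) u(2) by linarith
    then show False using x(3) \<open>\<not> f u \<le> c\<close> by simp
  qed
  have "z1 = b"
  proof (rule ccontr)
    assume "z1 \<noteq> b"
    define Z' where "Z' = {z \<in> Z. z1 < z}"
    have finZ': "finite Z'" using finZ by (simp add: Z'_def)
    have "b \<in> Z'" using \<open>z1 \<noteq> b\<close> z1Z bZ by (simp add: Z'_def Z_def)
    define z2 where "z2 = Min Z'"
    have z2: "z2 \<in> Z'" using Min_in[OF finZ'] \<open>b \<in> Z'\<close> unfolding z2_def by blast
    then have z12: "z1 < z2" and fz: "f z1 = c" "f z2 = c" using z1Z by (auto simp: Z'_def Z_def)
    obtain \<delta>1 where "\<delta>1 > 0" and \<delta>1: "\<And>h. 0 < h \<Longrightarrow> h < \<delta>1 \<Longrightarrow> f z1 < f (z1 + h)"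
      using DERIV_pos_inc_right[OF der up] z1Z by (force simp: Z_def)
    obtain \<delta>2 where "\<delta>2 > 0" and \<delta>2: "\<And>h. 0 < h \<Longrightarrow> h < \<delta>2 \<Longrightarrow> f (z2 - h) < f z2"
      using DERIV_pos_inc_left[OF der up] z2 by (force simp: Z'_def Z_def)
    define e where "e = min (min \<delta>1 \<delta>2) (z2 - z1) / 2"
    have e: "0 < e" "e < \<delta>1" "e < \<delta>2" "z1 + e \<le> z2 - e"
      using \<open>\<delta>1 > 0\<close> \<open>\<delta>2 > 0\<close> z12 by (auto simp: e_def)
    obtain x where x: "z1 + e \<le> x" "x \<le> z2 - e" "f x = c"
      using IVT2'[of f "z2 - e" c "z1 + e"] \<delta>1[of e] \<delta>2[of e] e fz cont by fastforce
    then have "x \<in> Z'" using e z1Z z2 by (auto simp: Z'_def Z_def)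
    then have "z2 \<le> x" using finZ' unfolding z2_def by simp
    then show False using x e by simp
  qed
  then show ?thesis using below v by simp
qed

lemma Max_esym_line_roots_gap:
  assumes d1: "1 \<le> d" and dm: "d \<le> m" and eps0: "0 \<le> eps" and eps2: "eps < 1/2"
    and epsb: "2 \<le> d \<Longrightarrow> eps \<le> half_radius d m / 8"
    and c12: "c1 < c2" and ac1: "\<bar>c1\<bar> \<le> eps" and ac2: "\<bar>c2\<bar> \<le> eps"
    and ne1: "esym_line_roots d m c1 \<noteq> {}" and ne2: "esym_line_roots d m c2 \<noteq> {}"
  shows "Max (esym_line_roots d m c1) < Max (esym_line_roots d m c2)"
    and "Max (esym_line_roots d m c2) - Max (esym_line_roots d m c1) \<le> (c2 - c1) / (2 * real m * half_radius d m)"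
proof -
  define \<rho>1 where "\<rho>1 = Max (esym_line_roots d m c1)"
  define \<rho>2 where "\<rho>2 = Max (esym_line_roots d m c2)"
  define \<kappa> where "\<kappa> = 2 * real m * half_radius d m"
  define D where "D v = real (m+1) * esym_line d m (d-1) v" for v
  have kpos: "0 < \<kappa>" using d1 dm half_radius_pos[OF d1, of m] by (simp add: \<kappa>_def)
  have c1h: "\<bar>c1\<bar> < 1/2" and c2h: "\<bar>c2\<bar> < 1/2" using ac1 ac2 eps2 by auto
  have fin2: "finite (esym_line_roots d m c2)" using finite_esym_line_roots c2h by auto
  note r1 = Max_esym_line_roots[OF d1 dm c1h ne1, folded \<rho>1_def]
  note r2 = Max_esym_line_roots[OF d1 dm c2h ne2, folded \<rho>2_def]
  have g1: "esym_line d m d \<rho>1 = c1" using r1(1) by (simp add: esym_line_roots_def)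
  have g2: "esym_line d m d \<rho>2 = c2" using r2(1) by (simp add: esym_line_roots_def)
  have ge1: "c1 \<le> esym_line d m d u" if "\<rho>1 \<le> u" for u
    using r1(4)[of u] g1 that by (cases "u = \<rho>1") auto
  have der: "\<And>v. (esym_line d m d has_real_derivative D v) (at v)"
    unfolding D_def by (rule esym_line_top_has_real_derivative[OF d1])
  have slope: "\<kappa> \<le> D v" if v: "\<rho>1 \<le> v" "v \<le> \<rho>2" "esym_line d m d v \<le> c2" for v
  proof -
    have "v \<le> - half_radius d m"
    proof (rule ccontr)
      assume "\<not> v \<le> - half_radius d m"
      then have "1/2 \<le> esym_line d m d v"
        using v r2(3) half_radius_pos[OF d1, of m] by (intro esym_line_ge_half[OF d1]) auto
      then show False using v c2h by auto
    qed
    moreover have "\<bar>esym_line d m d v\<bar> \<le> eps" using ge1[OF v(1)] v(3) ac1 ac2 by auto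
    moreover have "-eps \<le> esym_line d m d u" if "v \<le> u" for u using ge1[of u] v that ac1 by auto
    ultimately show ?thesis unfolding \<kappa>_def D_def
      using esym_line_derivative_lower_bound[OF d1 dm eps0 epsb] r1(2) v by force
  qed
  obtain z where z: "\<rho>1 \<le> z" "esym_line d m d z = c2"
    using IVT'[of "esym_line d m d" \<rho>1 c2 0] g1 c12 c2h esym_line_at_0[of d m] r1(3)
      half_radius_pos[OF d1, of m] continuous_on_esym_line by force
  then have "z \<le> \<rho>2" using fin2 unfolding \<rho>2_def by (simp add: esym_line_roots_def)
  moreover have "z \<noteq> \<rho>1" using z g1 c12 by auto
  ultimately have lt: "\<rho>1 < \<rho>2" using z by simp
  then show "Max (esym_line_roots d m c1) < Max (esym_line_roots d m c2)" unfolding \<rho>1_def \<rho>2_def .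
  have below: "esym_line d m d v \<le> c2" if "\<rho>1 \<le> v" "v \<le> \<rho>2" for v
    using fin2 g1 c12 lt g2 slope kpos that
    by (intro le_level_if_crossings_upward[OF der, of c2 \<rho>1 \<rho>2])
       (auto simp: esym_line_roots_def intro: less_le_trans)
  obtain \<xi> where xi: "\<rho>1 < \<xi>" "\<xi> < \<rho>2"
    and mv: "esym_line d m d \<rho>2 - esym_line d m d \<rho>1 = (\<rho>2 - \<rho>1) * D \<xi>"
    using MVT2[OF lt, of "esym_line d m d" D] der by blast
  have "\<kappa> \<le> D \<xi>" using slope[of \<xi>] below[of \<xi>] xi by simp
  then have "(\<rho>2 - \<rho>1) * \<kappa> \<le> c2 - c1" using mv g1 g2 lt by (simp add: mult_left_mono)
  then show "Max (esym_line_roots d m c2) - Max (esym_line_roots d m c1) \<le> (c2 - c1) / (2 * real m * half_radius d m)"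
    using kpos unfolding \<rho>1_def[symmetric] \<rho>2_def[symmetric] \<kappa>_def[symmetric] by (simp add: pos_le_divide_eq)
qed

lemma card_subsets_with_card_Int:
  fixes S :: "'n::finite set"
  assumes jk: "j \<le> k"
  shows "card {T. card T = k \<and> card (T \<inter> S) = j} = (card S choose j) * ((CARD('n) - card S) choose (k - j))"
proof -
  define A where "A = {U. U \<subseteq> S \<and> card U = j} \<times> {V. V \<subseteq> -S \<and> card V = k - j}"
  have img: "{T. card T = k \<and> card (T \<inter> S) = j} = (\<lambda>(U,V). U \<union> V) ` A"
  proof (intro equalityI subsetI)
    fix T assume "T \<in> {T. card T = k \<and> card (T \<inter> S) = j}"
    then have T: "card T = k" "card (T \<inter> S) = j" by auto
    have "card T = card (T \<inter> S) + card (T \<inter> -S)"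
      by (subst card_Un_disjoint[symmetric]) (auto intro: arg_cong[where f=card])
    then have "card (T \<inter> -S) = k - j" using T by simp
    then have "(T \<inter> S, T \<inter> -S) \<in> A" using T by (auto simp: A_def)
    moreover have "T = (\<lambda>(U,V). U \<union> V) (T \<inter> S, T \<inter> -S)" by auto
    ultimately show "T \<in> (\<lambda>(U,V). U \<union> V) ` A" by blast
  next
    fix T assume "T \<in> (\<lambda>(U,V). U \<union> V) ` A"
    then obtain U V where UV: "U \<subseteq> S" "card U = j" "V \<subseteq> -S" "card V = k - j" "T = U \<union> V"
      by (auto simp: A_def)
    have "U \<inter> V = {}" using UV by auto
    then have "card T = card U + card V" using UV card_Un_disjoint[of U V] by simp
    moreover have "T \<inter> S = U" using UV by auto
    ultimately show "T \<in> {T. card T = k \<and> card (T \<inter> S) = j}" using UV jk by auto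
  qed
  have inj: "inj_on (\<lambda>(U,V). U \<union> V) A"
  proof (rule inj_onI)
    fix x y assume "x \<in> A" "y \<in> A" "(\<lambda>(U,V). U \<union> V) x = (\<lambda>(U,V). U \<union> V) y"
    then show "x = y" unfolding A_def by (cases x, cases y) auto
  qed
  have "card A = (card S choose j) * (card (-S) choose (k - j))"
    unfolding A_def card_cartesian_product by (simp add: n_subsets)
  moreover have "card (-S) = CARD('n) - card S"
    using card_Diff_subset[of S UNIV] by (simp add: Compl_eq_Diff_UNIV)
  ultimately show ?thesis unfolding img card_image[OF inj] by simp
qed

lemma esym_two_valued_vec:
  fixes a b :: "'a::comm_ring_1" and S :: "'n::finite set"
  shows "esym k (\<chi> i. if i \<in> S then a else b) = esym_two_valued (card S) (CARD('n) - card S) k a b"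
proof -
  define F where "F = {T::'n set. card T = k}"
  have finF: "finite F" by simp
  have prodT: "(\<Prod>i\<in>T. if i \<in> S then a else b) = a ^ card (T \<inter> S) * b ^ (k - card (T \<inter> S))"
    if "T \<in> F" for T
  proof -
    have "(\<Prod>i\<in>T. if i \<in> S then a else b) = (\<Prod>i\<in>T \<inter> S. a) * (\<Prod>i\<in>T \<inter> -S. b)"
      by (subst prod.If_cases) (auto simp: Int_def Compl_eq)
    also have "card (T \<inter> -S) = k - card (T \<inter> S)"
    proof -
      have "card T = card (T \<inter> S) + card (T \<inter> -S)"
        by (subst card_Un_disjoint[symmetric]) (auto intro: arg_cong[where f=card])
      then show ?thesis using that by (simp add: F_def)
    qed
    then have "(\<Prod>i\<in>T \<inter> -S. b) = b ^ (k - card (T \<inter> S))" by simp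
    finally show ?thesis by simp
  qed
  have "esym k (\<chi> i. if i \<in> S then a else b) = (\<Sum>T\<in>F. a ^ card (T \<inter> S) * b ^ (k - card (T \<inter> S)))"
    unfolding esym_def F_def[symmetric] by (rule sum.cong) (simp_all add: prodT)
  also have "\<dots> = (\<Sum>j\<le>k. \<Sum>T\<in>{T \<in> F. card (T \<inter> S) = j}. a ^ card (T \<inter> S) * b ^ (k - card (T \<inter> S)))"
  proof (rule sum.group[symmetric])
    show "finite F" by simp
    show "finite {..k}" by simp
    show "(\<lambda>T. card (T \<inter> S)) ` F \<subseteq> {..k}"
    proof
      fix x assume "x \<in> (\<lambda>T. card (T \<inter> S)) ` F"
      then obtain T where "T \<in> F" "x = card (T \<inter> S)" by auto
      moreover have "card (T \<inter> S) \<le> card T" by (rule card_mono) auto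
      ultimately show "x \<in> {..k}" by (auto simp: F_def)
    qed
  qed
  also have "\<dots> = (\<Sum>j\<le>k. of_nat (card {T \<in> F. card (T \<inter> S) = j}) * (a ^ j * b ^ (k - j)))"
    by (intro sum.cong refl) simp
  also have "\<dots> = esym_two_valued (card S) (CARD('n) - card S) k a b"
    unfolding esym_two_valued_def
  proof (rule sum.cong[OF refl])
    fix j assume "j \<in> {..k}"
    then have "card {T \<in> F. card (T \<inter> S) = j} = (card S choose j) * ((CARD('n) - card S) choose (k - j))"
      unfolding F_def using card_subsets_with_card_Int[of j k S] by simp
    then show "of_nat (card {T \<in> F. card (T \<inter> S) = j}) * (a ^ j * b ^ (k - j))
      = of_nat ((card S choose j) * ((CARD('n) - card S) choose (k - j))) * a ^ j * b ^ (k - j)"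
      by (simp add: mult.assoc)
  qed
  finally show ?thesis .
qed

lemma qM_shift_all_ones:
  fixes z :: "'a::{real_algebra_1,comm_ring_1}" and x :: "real ^ 'n::{finite,linorder}"
  shows "qM M (\<chi> i. z + of_real (x $ i)) = of_real (qM M x)"
  unfolding qM_def by (simp add: of_real_prod)

lemma card_2_Min_Max:
  fixes e :: "'n::linorder set"
  assumes "card e = 2"
  shows "Min e < Max e \<and> e = {Min e, Max e}"
proof -
  obtain a b where ab: "e = {a, b}" "a \<noteq> b" using assms card_2_iff by metis
  show ?thesis
  proof (cases "a < b")
    case True then show ?thesis using ab by auto
  next
    case False then have "b < a" using ab by auto
    then show ?thesis using ab by (auto simp: insert_commute)
  qed
qed

lemma card_Int_eq_1_iff_Min_Max:
  fixes e :: "'a::linorder set"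
  assumes "card e = 2"
  shows "card (e \<inter> S) = 1 \<longleftrightarrow> (Min e \<in> S) \<noteq> (Max e \<in> S)"
proof -
  obtain a b where "a < b" "e = {a, b}" using card_2_Min_Max[OF assms] by blast
  then show ?thesis by (cases "a \<in> S"; cases "b \<in> S") auto
qed

lemma qM_ind_vec_not_crossing:
  fixes M :: "'n::{finite,linorder} set set"
  assumes "is_matching d M" "\<not> fully_crosses M S"
  shows "qM M (ind_vec S) = 0"
proof -
  obtain e where e: "e \<in> M" "card (e \<inter> S) \<noteq> 1" using assms(2) by (auto simp: fully_crosses_def)
  then have "(Min e \<in> S) = (Max e \<in> S)"
    using assms(1) card_Int_eq_1_iff_Min_Max by (auto simp: is_matching_def)
  then have "ind_vec S $ Min e - ind_vec S $ Max e = 0" by (simp add: ind_vec_def)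
  then show ?thesis unfolding qM_def using e(1) by (intro prod_zero) auto
qed

lemma abs_qM_ind_vec_crossing:
  fixes M :: "'n::{finite,linorder} set set"
  assumes "is_matching d M" "fully_crosses M S"
  shows "\<bar>qM M (ind_vec S)\<bar> = 1"
proof -
  have "(Min e \<in> S) \<noteq> (Max e \<in> S)" if "e \<in> M" for e
    using assms that card_Int_eq_1_iff_Min_Max by (auto simp: is_matching_def fully_crosses_def)
  then have "\<bar>ind_vec S $ Min e - ind_vec S $ Max e\<bar> = 1" if "e \<in> M" for e
    using that by (auto simp: ind_vec_def)
  then show ?thesis unfolding qM_def abs_prod by (simp add: prod.neutral)
qed

lemma ps_line_ind_vec_complex:
  fixes z :: "'a::{real_algebra_1,comm_ring_1}" and Ms :: "'n::{finite,linorder} set set set"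
  assumes Mm: "\<forall>M\<in>Ms. is_matching d M" and cS: "card S = d"
    and M0: "M0 \<in> Ms" and uniq: "\<And>M. M \<in> Ms \<Longrightarrow> fully_crosses M S \<Longrightarrow> M = M0"
  shows "ps d eps Ms s (\<chi> i. z + of_real (ind_vec S $ i))
     = esym_two_valued d (CARD('n) - d) d (z+1) z - of_real (eps * (if s M0 then qM M0 (ind_vec S) else 0))"
proof -
  have v: "(\<chi> i. z + of_real (ind_vec S $ i)) = (\<chi> i. if i \<in> S then z + 1 else z)"
    by (simp add: vec_eq_iff ind_vec_def)
  have e: "esym d (\<chi> i. z + of_real (ind_vec S $ i)) = esym_two_valued d (CARD('n) - d) d (z+1) z"
    unfolding v esym_two_valued_vec cS ..
  have finMs: "finite Ms" by simp
  have "(\<Sum>M\<in>Ms. if s M then qM M (\<chi> i. z + of_real (ind_vec S $ i)) else 0)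
      = (\<Sum>M\<in>Ms. if s M then of_real (qM M (ind_vec S)) else (0::'a))"
    by (simp only: qM_shift_all_ones)
  also have "\<dots> = (if s M0 then of_real (qM M0 (ind_vec S)) else 0)"
  proof -
    have "(\<Sum>M\<in>Ms. if s M then of_real (qM M (ind_vec S)) else (0::'a))
       = (if s M0 then of_real (qM M0 (ind_vec S)) else 0) + (\<Sum>M\<in>Ms - {M0}. if s M then of_real (qM M (ind_vec S)) else (0::'a))"
      using M0 finMs by (simp add: sum.remove)
    also have "(\<Sum>M\<in>Ms - {M0}. if s M then of_real (qM M (ind_vec S)) else (0::'a)) = 0"
    proof (rule sum.neutral, rule ballI)
      fix M assume M: "M \<in> Ms - {M0}"
      then have "\<not> fully_crosses M S" using uniq by auto
      then have "qM M (ind_vec S) = 0" using qM_ind_vec_not_crossing Mm M by blast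
      then show "(if s M then of_real (qM M (ind_vec S)) else (0::'a)) = 0" by simp
    qed
    finally show ?thesis by simp
  qed
  finally show ?thesis unfolding ps_def e by simp
qed

lemma ps_line_ind_vec:
  fixes Ms :: "'n::{finite,linorder} set set set"
  assumes Mm: "\<forall>M\<in>Ms. is_matching d M" and cS: "card S = d"
    and M0: "M0 \<in> Ms" and uniq: "\<And>M. M \<in> Ms \<Longrightarrow> fully_crosses M S \<Longrightarrow> M = M0"
  shows "ps d eps Ms s (t *\<^sub>R all_ones + ind_vec S)
     = esym_line d (CARD('n) - d) d t - eps * (if s M0 then qM M0 (ind_vec S) else 0)"
proof -
  have "t *\<^sub>R all_ones + ind_vec S = (\<chi> i. t + of_real (ind_vec S $ i))"
    by (simp add: vec_eq_iff all_ones_def)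
  then show ?thesis using ps_line_ind_vec_complex[OF Mm cS M0 uniq, where z=t and eps=eps and s=s] by (simp add: esym_line_def)
qed

lemma ps_homogeneous:
  fixes Ms :: "'n::{finite,linorder} set set set"
  assumes Mm: "\<forall>M\<in>Ms. is_matching d M"
  shows "ps d eps Ms s (c *\<^sub>R x) = c^d * ps d eps Ms s x"
proof -
  have e: "esym d (c *\<^sub>R x) = c^d * esym d x"
    unfolding esym_def sum_distrib_left
    by (rule sum.cong) (auto simp: prod.distrib)
  have q: "qM M (c *\<^sub>R x) = c^d * qM M x" if "M \<in> Ms" for M
  proof -
    have "card M = d" using Mm that by (auto simp: is_matching_def)
    then show ?thesis unfolding qM_def by (simp add: prod.distrib right_diff_distrib[symmetric])
  qed
  have "(\<Sum>M\<in>Ms. if s M then qM M (c *\<^sub>R x) else 0) = c^d * (\<Sum>M\<in>Ms. if s M then qM M x else 0)"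
    unfolding sum_distrib_left by (rule sum.cong) (auto simp: q)
  then show ?thesis unfolding ps_def e by (simp add: algebra_simps)
qed

lemma ps_all_ones:
  fixes Ms :: "'n::{finite,linorder} set set set"
  assumes Mm: "\<forall>M\<in>Ms. is_matching d M" and d1: "1 \<le> d"
  shows "ps d eps Ms s all_ones = real (card (UNIV :: 'n set) choose d)"
proof -
  have e: "esym d (all_ones :: (real, 'n) vec) = real (card (UNIV :: 'n set) choose d)"
  proof -
    have "esym d (all_ones :: (real, 'n) vec) = real (card {T::'n set. card T = d})"
      unfolding esym_def by (simp add: all_ones_def)
    also have "{T::'n set. card T = d} = {T. T \<subseteq> UNIV \<and> card T = d}" by simp
    finally show ?thesis using n_subsets[of "UNIV :: 'n set" d] by simp
  qed
  have q: "qM M (all_ones :: (real, 'n) vec) = 0" if "M \<in> Ms" for M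
  proof -
    have "card M = d" using Mm that by (auto simp: is_matching_def)
    then have "M \<noteq> {}" using d1 by auto
    then obtain e where "e \<in> M" by auto
    then show ?thesis unfolding qM_def by (intro prod_zero) (auto simp: all_ones_def)
  qed
  have "(\<Sum>M\<in>Ms. if s M then qM M (all_ones :: (real, 'n) vec) else 0) = 0"
    by (rule sum.neutral) (simp add: q)
  then show ?thesis unfolding ps_def e by simp
qed

lemma continuous_on_ps_line:
  fixes Ms :: "'n::{finite,linorder} set set set" and a b :: "real ^ ('n::{finite,linorder})"
  shows "continuous_on A (\<lambda>t. ps d eps Ms s (t *\<^sub>R a + b))"
proof -
  have "continuous_on A (\<lambda>t. if s M then qM M (t *\<^sub>R a + b) else 0)" for M
    by (cases "s M") (auto simp: qM_def intro!: continuous_intros)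
  then show ?thesis unfolding ps_def esym_def by (intro continuous_intros)
qed

context
  fixes d :: nat and eps :: real and Ms :: "'n::{finite,linorder} set set set" and s :: "'n set set \<Rightarrow> bool"
  assumes Mm: "\<forall>M\<in>Ms. is_matching d M" and d1: "1 \<le> d" and dn: "d \<le> card (UNIV :: 'n set)"
begin

lemma ps_scaleR_all_ones: "ps d eps Ms s (t *\<^sub>R (all_ones :: (real, 'n) vec)) = t^d * real (card (UNIV :: 'n set) choose d)"
  using ps_homogeneous[OF Mm, of eps s t all_ones] ps_all_ones[OF Mm d1, of eps s] by simp

lemma card_choose_pos: "0 < real (card (UNIV :: 'n set) choose d)"
  using dn by simp

lemma zero_in_hcone: "(0 :: (real, 'n) vec) \<in> hcone (ps d eps Ms s)"
  unfolding hcone_def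
proof (safe)
  fix t :: real assume h: "ps d eps Ms s (t *\<^sub>R all_ones + 0) = (0::real)"
  have e: "t *\<^sub>R all_ones + 0 = t *\<^sub>R (all_ones :: (real, 'n) vec)" by simp
  have "t^d * real (card (UNIV :: 'n set) choose d) = 0" using h unfolding e ps_scaleR_all_ones .
  then have "t^d = 0" using card_choose_pos by (metis less_irrefl mult_eq_0_iff)
  then show "t \<le> 0" by simp
qed

lemma hcone_scaleR:
  assumes x: "x \<in> hcone (ps d eps Ms s)" and r: "0 < r"
  shows "r *\<^sub>R x \<in> hcone (ps d eps Ms s)"
  unfolding hcone_def
proof (safe)
  fix t :: real assume t: "ps d eps Ms s (t *\<^sub>R all_ones + r *\<^sub>R x) = 0"
  have "t *\<^sub>R all_ones + r *\<^sub>R x = r *\<^sub>R ((t / r) *\<^sub>R all_ones + x)"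
    using r by (simp add: scaleR_add_right)
  then have "r^d * ps d eps Ms s ((t / r) *\<^sub>R all_ones + x) = 0" using t ps_homogeneous[OF Mm] by metis
  then have "ps d eps Ms s ((t / r) *\<^sub>R all_ones + x) = 0" using r by simp
  then have "t / r \<le> 0" using x by (simp add: hcone_def)
  then show "t \<le> 0" using r by (simp add: divide_le_0_iff)
qed

lemma ps_nonneg_on_hcone:
  assumes y: "y \<in> hcone (ps d eps Ms s)"
  shows "0 \<le> ps d eps Ms s y"
proof (rule ccontr)
  assume neg: "\<not> 0 \<le> ps d eps Ms s y"
  define \<psi> where "\<psi> u = ps d eps Ms s (u *\<^sub>R y + all_ones)" for u
  have "continuous_on UNIV \<psi>" unfolding \<psi>_def by (rule continuous_on_ps_line)
  then have ic: "isCont \<psi> 0" by (simp add: continuous_on_eq_continuous_at)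
  have p0: "\<psi> 0 = real (card (UNIV :: 'n set) choose d)"
    using ps_all_ones[OF Mm d1] by (simp add: \<psi>_def)
  obtain \<delta> where dp: "\<delta> > 0" and dh: "\<And>u. dist u 0 < \<delta> \<Longrightarrow> dist (\<psi> u) (\<psi> 0) < \<psi> 0"
    using ic[unfolded continuous_at_eps_delta] p0 card_choose_pos by metis
  define u where "u = \<delta> / 2"
  have up: "0 < u" "dist u 0 < \<delta>" using dp by (auto simp: u_def)
  have psu: "0 < \<psi> u" using dh[OF up(2)] by (simp add: dist_real_def abs_less_iff)
  define T where "T = 1 / u"
  have Tp: "0 < T" using up by (simp add: T_def)
  have "T *\<^sub>R all_ones + y = T *\<^sub>R (u *\<^sub>R y + all_ones)"
    using up by (simp add: T_def scaleR_add_right)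
  then have pT: "ps d eps Ms s (T *\<^sub>R all_ones + y) = T^d * \<psi> u"
    unfolding \<psi>_def using ps_homogeneous[OF Mm] by metis
  then have pTpos: "0 < ps d eps Ms s (T *\<^sub>R all_ones + y)" using Tp psu by simp
  have "\<exists>t. 0 \<le> t \<and> t \<le> T \<and> ps d eps Ms s (t *\<^sub>R all_ones + y) = 0"
    using neg pTpos Tp by (intro IVT' continuous_on_ps_line) auto
  then obtain t where t: "0 \<le> t" "ps d eps Ms s (t *\<^sub>R all_ones + y) = 0" by blast
  then have "t \<le> 0" using y by (simp add: hcone_def)
  with t have "t = 0" by simp
  then show False using t neg by simp
qed

lemma esym_lipschitz:
  fixes y z :: "(real, 'n) vec"
  assumes "norm y \<le> 1" "norm z \<le> 1"
  shows "\<bar>esym d y - esym d z\<bar> \<le> real d * real (card (UNIV :: 'n set) choose d) * dist y z"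
proof -
  have cy: "\<And>i. norm (y $ i) \<le> 1" and cz: "\<And>i. norm (z $ i) \<le> 1"
    using assms component_le_norm_cart[of y] component_le_norm_cart[of z] by (auto intro: order_trans)
  have ci: "\<bar>y $ i - z $ i\<bar> \<le> dist y z" for i
    using component_le_norm_cart[of "y - z" i] by (simp add: dist_norm)
  have "\<bar>esym d y - esym d z\<bar> = \<bar>\<Sum>T\<in>{T. card T = d}. (\<Prod>i\<in>T. y $ i) - (\<Prod>i\<in>T. z $ i)\<bar>"
    unfolding esym_def by (simp add: sum_subtractf)
  also have "\<dots> \<le> (\<Sum>T\<in>{T::'n set. card T = d}. \<bar>(\<Prod>i\<in>T. y $ i) - (\<Prod>i\<in>T. z $ i)\<bar>)"
    by (rule sum_abs)
  also have "\<dots> \<le> (\<Sum>T\<in>{T::'n set. card T = d}. real d * dist y z)"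
  proof (rule sum_mono)
    fix T :: "'n set" assume T: "T \<in> {T. card T = d}"
    have "\<bar>(\<Prod>i\<in>T. y $ i) - (\<Prod>i\<in>T. z $ i)\<bar> \<le> (\<Sum>i\<in>T. norm (y $ i - z $ i))"
      using norm_prod_diff[of T "\<lambda>i. y $ i" "\<lambda>i. z $ i"] cy cz by simp
    also have "\<dots> \<le> (\<Sum>i\<in>T. dist y z)" using ci by (intro sum_mono) simp
    also have "\<dots> = real d * dist y z" using T by simp
    finally show "\<bar>(\<Prod>i\<in>T. y $ i) - (\<Prod>i\<in>T. z $ i)\<bar> \<le> real d * dist y z" .
  qed
  also have "\<dots> = real (card {T::'n set. card T = d}) * (real d * dist y z)" by simp
  also have "card {T::'n set. card T = d} = card (UNIV :: 'n set) choose d"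
    using n_subsets[of "UNIV :: 'n set" d] by simp
  finally show ?thesis by (simp add: mult_ac)
qed

lemma qM_lipschitz:
  fixes y z :: "(real, 'n) vec"
  assumes "norm y \<le> 1" "norm z \<le> 1" and M: "M \<in> Ms"
  shows "\<bar>qM M y - qM M z\<bar> \<le> 2^d * real d * dist y z"
proof -
  have cM: "card M = d" using Mm M by (auto simp: is_matching_def)
  have cy: "\<And>i. \<bar>y $ i\<bar> \<le> 1" and cz: "\<And>i. \<bar>z $ i\<bar> \<le> 1"
    using assms component_le_norm_cart[of y] component_le_norm_cart[of z] by (auto intro: order_trans)
  have ci: "\<bar>y $ i - z $ i\<bar> \<le> dist y z" for i
    using component_le_norm_cart[of "y - z" i] by (simp add: dist_norm)
  define f where "f w e = (w $ Min e - w $ Max e) / 2" for w :: "(real, 'n) vec" and e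
  have q2: "qM M w = 2^d * (\<Prod>e\<in>M. f w e)" for w
  proof -
    have "qM M w = (\<Prod>e\<in>M. 2 * f w e)" unfolding qM_def f_def by (rule prod.cong) (simp_all add: field_simps)
    also have "\<dots> = 2^d * (\<Prod>e\<in>M. f w e)" by (simp add: prod.distrib cM)
    finally show ?thesis .
  qed
  have fb: "norm (f w e) \<le> 1" if "\<And>i. \<bar>w $ i\<bar> \<le> 1" for w e
  proof -
    have "\<bar>w $ Min e - w $ Max e\<bar> \<le> \<bar>w $ Min e\<bar> + \<bar>w $ Max e\<bar>" by (rule abs_triangle_ineq4)
    also have "\<dots> \<le> 2" using that[of "Min e"] that[of "Max e"] by simp
    finally show ?thesis by (simp add: f_def)
  qed
  have fd: "\<bar>f y e - f z e\<bar> \<le> dist y z" for e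
  proof -
    have "f y e - f z e = ((y $ Min e - z $ Min e) - (y $ Max e - z $ Max e)) / 2"
      by (simp add: f_def diff_divide_distrib)
    then have "\<bar>f y e - f z e\<bar> = \<bar>((y $ Min e - z $ Min e) - (y $ Max e - z $ Max e)) / 2\<bar>"
      by (simp only:)
    also have "\<dots> = \<bar>(y $ Min e - z $ Min e) - (y $ Max e - z $ Max e)\<bar> / 2" by simp
    also have "\<dots> \<le> (\<bar>y $ Min e - z $ Min e\<bar> + \<bar>y $ Max e - z $ Max e\<bar>) / 2"
      by (intro divide_right_mono abs_triangle_ineq4) simp
    also have "\<dots> \<le> (dist y z + dist y z) / 2" using ci[of "Min e"] ci[of "Max e"] by simp
    finally show ?thesis by simp
  qed
  have "\<bar>(\<Prod>e\<in>M. f y e) - (\<Prod>e\<in>M. f z e)\<bar> \<le> (\<Sum>e\<in>M. norm (f y e - f z e))"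
    using norm_prod_diff[of M "f y" "f z"] fb[OF cy] fb[OF cz] by simp
  also have "\<dots> \<le> (\<Sum>e\<in>M. dist y z)" using fd by (intro sum_mono) simp
  also have "\<dots> = real d * dist y z" using cM by simp
  finally have "\<bar>(\<Prod>e\<in>M. f y e) - (\<Prod>e\<in>M. f z e)\<bar> \<le> real d * dist y z" .
  then have "2^d * \<bar>(\<Prod>e\<in>M. f y e) - (\<Prod>e\<in>M. f z e)\<bar> \<le> 2^d * (real d * dist y z)"
    by (intro mult_left_mono) auto
  moreover have "\<bar>2^d * (\<Prod>e\<in>M. f y e) - 2^d * (\<Prod>e\<in>M. f z e)\<bar> = 2^d * \<bar>(\<Prod>e\<in>M. f y e) - (\<Prod>e\<in>M. f z e)\<bar>"
    by (simp add: abs_mult right_diff_distrib[symmetric])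
  ultimately show ?thesis unfolding q2 by (simp add: mult_ac)
qed

lemma ps_lipschitz:
  fixes y z :: "(real, 'n) vec"
  assumes "norm y \<le> 1" "norm z \<le> 1" and eps: "0 \<le> eps"
  shows "\<bar>ps d eps Ms s y - ps d eps Ms s z\<bar>
     \<le> (real d * real (card (UNIV :: 'n set) choose d) + eps * real (card Ms) * 2^d * real d) * dist y z"
proof -
  define Q where "Q w = (\<Sum>M\<in>Ms. if s M then qM M w else 0)" for w :: "(real, 'n) vec"
  have "\<bar>Q y - Q z\<bar> \<le> (\<Sum>M\<in>Ms. \<bar>(if s M then qM M y else 0) - (if s M then qM M z else 0)\<bar>)"
    unfolding Q_def sum_subtractf[symmetric] by (rule sum_abs)
  also have "\<dots> \<le> (\<Sum>M\<in>Ms. 2^d * real d * dist y z)"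
  proof (rule sum_mono)
    fix M assume M: "M \<in> Ms"
    show "\<bar>(if s M then qM M y else 0) - (if s M then qM M z else 0)\<bar> \<le> 2^d * real d * dist y z"
      using qM_lipschitz[OF assms(1,2) M] by (cases "s M") auto
  qed
  also have "\<dots> = real (card Ms) * 2^d * real d * dist y z" by (simp add: mult_ac)
  finally have Qb: "\<bar>Q y - Q z\<bar> \<le> real (card Ms) * 2^d * real d * dist y z" .
  have "\<bar>ps d eps Ms s y - ps d eps Ms s z\<bar> = \<bar>(esym d y - esym d z) - eps * (Q y - Q z)\<bar>"
    unfolding ps_def Q_def by (simp add: algebra_simps)
  also have "\<dots> \<le> \<bar>esym d y - esym d z\<bar> + eps * \<bar>Q y - Q z\<bar>"
    using abs_triangle_ineq4[of "esym d y - esym d z" "eps * (Q y - Q z)"] eps by (simp add: abs_mult)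
  also have "\<dots> \<le> real d * real (card (UNIV :: 'n set) choose d) * dist y z + eps * (real (card Ms) * 2^d * real d * dist y z)"
    using esym_lipschitz[OF assms(1,2)] Qb eps by (intro add_mono mult_left_mono) auto
  finally show ?thesis by (simp add: algebra_simps)
qed

lemma infdist_hcone_ge:
  fixes z :: "(real, 'n) vec"
  assumes nz: "norm z \<le> 1/2" and pz: "ps d eps Ms s z \<le> - \<delta>" and eps: "0 \<le> eps"
    and L: "real d * real (card (UNIV :: 'n set) choose d) + eps * real (card Ms) * 2^d * real d \<le> L"
  shows "min (1/2) (\<delta> / L) \<le> infdist z (hcone (ps d eps Ms s))"
proof -
  have ne: "hcone (ps d eps Ms s) \<noteq> {}" using zero_in_hcone by blast
  have "min (1/2) (\<delta> / L) \<le> dist z y" if y: "y \<in> hcone (ps d eps Ms s)" for y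
  proof (cases "dist z y < 1/2")
    case True
    have "norm y \<le> norm z + dist z y"
      by (metis dist_commute dist_norm norm_triangle_sub add.commute)
    then have ny: "norm y \<le> 1" using nz True by simp
    have "0 < real d * real (card (UNIV :: 'n set) choose d)" using d1 card_choose_pos by simp
    moreover have "0 \<le> eps * real (card Ms) * 2^d * real d" using eps by simp
    ultimately have Lpos: "0 < L" using L by linarith
    have "\<bar>ps d eps Ms s y - ps d eps Ms s z\<bar>
        \<le> (real d * real (card (UNIV :: 'n set) choose d) + eps * real (card Ms) * 2^d * real d) * dist y z"
      using ps_lipschitz[OF ny _ eps] nz by simp
    also have "\<dots> \<le> L * dist y z" using L by (intro mult_right_mono) auto
    finally have "\<bar>ps d eps Ms s y - ps d eps Ms s z\<bar> \<le> L * dist y z" .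
    then have "\<delta> \<le> L * dist z y"
      using ps_nonneg_on_hcone[OF y] pz by (simp add: dist_commute abs_le_iff)
    then have "\<delta> / L \<le> dist z y" using Lpos by (simp add: divide_le_eq mult.commute)
    then show ?thesis by simp
  qed simp
  then show ?thesis
    unfolding infdist_notempty[OF ne] by (rule cINF_greatest[OF ne])
qed

end

lemma esym_two_valued_of_real: "esym_two_valued d m k (complex_of_real a) (complex_of_real b) = complex_of_real (esym_two_valued d m k a b)"
  by (simp add: esym_two_valued_def)

text \<open>The only place where hyperbolicity enters: \<open>esym_line d m d - c\<close> is a nonconstant polynomial,
  so it has a complex root, which is real since it is a root of \<open>t \<mapsto> p_s (t \<one> + \<one>_S)\<close>.\<close>
lemma esym_line_roots_nonempty:
  fixes Ms :: "'n::{finite,linorder} set set set"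
  assumes hyp: "hyperbolic (ps d eps Ms s)" and Mm: "\<forall>M\<in>Ms. is_matching d M" and cS: "card S = d"
    and M0: "M0 \<in> Ms" and uniq: "\<And>M. M \<in> Ms \<Longrightarrow> fully_crosses M S \<Longrightarrow> M = M0"
    and d1: "1 \<le> d"
    and c: "\<bar>eps * (if s M0 then qM M0 (ind_vec S) else 0)\<bar> < 1"
  shows "esym_line_roots d (card (UNIV :: 'n set) - d) (eps * (if s M0 then qM M0 (ind_vec S) else 0)) \<noteq> {}"
proof -
  define m where "m = card (UNIV :: 'n set) - d"
  define c where "c = eps * (if s M0 then qM M0 (ind_vec S) else 0)"
  define P where "P = (esym_line_poly d m d - [:complex_of_real c:] :: complex poly)"
  have polyP: "poly P z = esym_two_valued d m d (z+1) z - complex_of_real c" for z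
    by (simp add: P_def poly_esym_line_poly)
  have polyPps: "poly P z = ps d eps Ms s (\<chi> i. z + of_real (ind_vec S $ i))" for z
    using ps_line_ind_vec_complex[OF Mm cS M0 uniq, where z=z and eps=eps and s=s] unfolding polyP m_def c_def
    by simp
  have polyPr: "poly P (complex_of_real t) = complex_of_real (esym_line d m d t - c)" for t
    unfolding polyP esym_line_def by (simp add: esym_two_valued_of_real[symmetric])
  have g1: "2 \<le> esym_line d m d 1"
  proof -
    have "(1+1::real)^d \<le> esym_line d m d 1" using power_le_esym_line[of 1 d m] by simp
    moreover have "(2::real) \<le> 2^d" using d1 by (metis self_le_power one_le_numeral not_one_le_zero order_less_le_trans
        le_zero_eq  order.refl power_one_right power_increasing)
    ultimately show ?thesis by simp
  qed
  have "poly P (complex_of_real 0) \<noteq> poly P (complex_of_real 1)"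
    unfolding polyPr using g1 esym_line_at_0[of d m] by simp
  then have "\<not> constant (poly P)" unfolding constant_def by blast
  then obtain z where z: "poly P z = 0" using fundamental_theorem_of_algebra by blast
  then have "ps d eps Ms s (\<chi> i. z + complex_of_real (ind_vec S $ i)) = 0" using polyPps by simp
  then have "z \<in> \<real>" using hyp unfolding hyperbolic_def by blast
  then obtain t where t: "z = complex_of_real t" by (auto elim: Reals_cases)
  then have "esym_line d m d t = c" using z polyPr[of t] by simp
  then have "t \<in> esym_line_roots d m c" by (simp add: esym_line_roots_def)
  then show ?thesis unfolding m_def c_def by blast
qed

lemma zero_set_ps_ind_vec:
  fixes Ms :: "'n::{finite,linorder} set set set"
  assumes Mm: "\<forall>M\<in>Ms. is_matching d M" and cS: "card S = d"
    and M0: "M0 \<in> Ms" and uniq: "\<And>M. M \<in> Ms \<Longrightarrow> fully_crosses M S \<Longrightarrow> M = M0"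
  shows "{t. ps d eps Ms s (t *\<^sub>R all_ones + ind_vec S) = 0}
    = esym_line_roots d (CARD('n) - d) (eps * (if s M0 then qM M0 (ind_vec S) else 0))"
  using ps_line_ind_vec[OF Mm cS M0 uniq] by (auto simp: esym_line_roots_def)

lemma lambda_max_shift_in_hcone:
  assumes "finite {t. p (t *\<^sub>R all_ones + x) = 0}"
  shows "lambda_max p x *\<^sub>R all_ones + x \<in> hcone p"
  unfolding hcone_def
proof safe
  fix t assume "p (t *\<^sub>R all_ones + (lambda_max p x *\<^sub>R all_ones + x)) = 0"
  then have "t + lambda_max p x \<in> {t. p (t *\<^sub>R all_ones + x) = 0}"
    by (simp add: scaleR_add_left add.assoc)
  then have "t + lambda_max p x \<le> lambda_max p x"
    unfolding lambda_max_def using assms by (rule Max_ge[rotated])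
  then show "t \<le> 0" by simp
qed

lemma norm_shift_ind_vec_le:
  fixes S :: "'n::finite set"
  assumes "-1 \<le> t" "t \<le> 0"
  shows "norm ((1 / (2 * real CARD('n))) *\<^sub>R (t *\<^sub>R all_ones + ind_vec S)) \<le> 1/2"
proof -
  define x where "x = t *\<^sub>R all_ones + ind_vec S"
  have "\<bar>x $ i\<bar> \<le> 1" for i using assms by (auto simp: x_def all_ones_def ind_vec_def)
  then have "norm x \<le> real CARD('n)"
    using norm_le_l1_cart[of x] sum_mono[of UNIV "\<lambda>i. \<bar>x $ i\<bar>" "\<lambda>_. 1"] by simp
  then have "(1 / (2 * real CARD('n))) * norm x \<le> (1 / (2 * real CARD('n))) * real CARD('n)"
    by (intro mult_left_mono) auto
  then show ?thesis by (simp add: x_def)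
qed

lemma hdist_commute: "hdist K K' = hdist K' K"
  unfolding hdist_def by (rule max.commute)

lemma infdist_le_hdist:
  fixes K K' :: "(real, 'n::finite) vec set"
  assumes z: "z \<in> cball 0 1 \<inter> K" and K': "0 \<in> K'"
  shows "infdist z K' \<le> hdist K K'"
proof -
  have "bdd_above ((\<lambda>x. infdist x K') ` (cball 0 1 \<inter> K))"
  proof (rule bdd_aboveI2)
    fix x assume "x \<in> cball (0::(real,'n) vec) 1 \<inter> K"
    then have "dist x 0 \<le> 1" by (simp add: dist_commute)
    then show "infdist x K' \<le> 1" using infdist_le[OF K', of x] by simp
  qed
  then have "infdist z K' \<le> (SUP x\<in>cball 0 1 \<inter> K. infdist x K')" using z by (rule cSUP_upper[rotated])
  then show ?thesis unfolding hdist_def by simp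
qed

lemma hdist_nonneg:
  fixes K K' :: "(real, 'n::finite) vec set"
  assumes "0 \<in> K" "0 \<in> K'"
  shows "0 \<le> hdist K K'"
  using infdist_le_hdist[of 0 K K'] assms infdist_nonneg[of 0 K'] by simp

lemma divide_le_mult_min:
  fixes \<gamma> \<kappa> K L r :: real
  assumes \<gamma>: "0 < \<gamma>" "\<gamma> \<le> 1/2" and L: "1 \<le> L" and r: "0 < r" "r \<le> 1"
    and pos: "0 < \<kappa>" "0 < K" and LK: "L \<le> \<kappa> * K * r"
  shows "\<gamma> / \<kappa> \<le> K * min (1/2) (r * \<gamma> / L)"
proof -
  have "\<kappa> * K * r \<le> \<kappa> * K" using r pos by (intro mult_left_le) auto
  then have "L \<le> \<kappa> * K" using LK by simp
  then have "\<gamma> \<le> \<kappa> * K / 2" using \<gamma> L by simp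
  then have a: "\<gamma> / \<kappa> \<le> K * (1/2)" using pos by (simp add: divide_le_eq mult.commute)
  have "\<gamma> * L \<le> \<gamma> * (\<kappa> * K * r)" using LK \<gamma> by (intro mult_left_mono) auto
  then have b: "\<gamma> / \<kappa> \<le> K * (r * \<gamma> / L)" using pos L by (simp add: field_simps)
  show ?thesis using a b pos by (simp add: min_mult_distrib_left)
qed

lemma binomial_product_le_power:
  assumes d1: "1 \<le> d" and dm: "d \<le> m"
  shows "(d * ((d+m) choose d) + 1) * (d + ((d+m) choose d)) * (2*(d+m))^d \<le> 18 * m * (d+m)^(d*m+1)"
proof (cases "4 \<le> m")
  case True
  define n where "n = d + m"
  define C where "C = n choose d"
  have n2: "2 \<le> n" using d1 dm by (simp add: n_def)
  have Cle: "C \<le> n^d" unfolding C_def by (rule binomial_le_pow) (simp add: n_def)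
  have C1: "1 \<le> C" unfolding C_def by (simp add: n_def Suc_leI)
  have dn: "d \<le> n^d"
  proof -
    have "d \<le> n" by (simp add: n_def)
    also have "n \<le> n^d" using d1 n2 by (simp add: self_le_power)
    finally show ?thesis .
  qed
  have A: "d * C + 1 \<le> 2 * d * n^d"
  proof -
    have "1 \<le> d * C" using d1 C1 by simp
    then have "d * C + 1 \<le> 2 * (d * C)" by simp
    also have "\<dots> \<le> 2 * (d * n^d)" using Cle by simp
    finally show ?thesis by simp
  qed
  have B: "d + C \<le> 2 * n^d" using dn Cle by simp
  have Cc: "(2*n)^d \<le> n^d * n^d"
  proof -
    have "(2::nat)^d \<le> n^d" using n2 by (rule power_mono) simp
    then show ?thesis by (simp add: power_mult_distrib)
  qed
  have "(d * C + 1) * (d + C) * (2*n)^d \<le> (2 * d * n^d) * (2 * n^d) * (n^d * n^d)"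
    using A B Cc by (intro mult_le_mono) auto
  also have "\<dots> = 4 * d * n^(4*d)"
  proof -
    have "n^(4*d) = (n^d)^4" by (simp add: power_mult[symmetric] mult.commute)
    also have "\<dots> = n^d * n^d * n^d * n^d" by (simp add: power4_eq_xxxx)
    finally show ?thesis by (simp add: mult_ac)
  qed
  also have "\<dots> \<le> 18 * m * n^(d*m+1)"
  proof -
    have "n^(4*d) \<le> n^(d*m+1)" using n2 True by (intro power_increasing) (auto simp: mult.commute intro: order_trans[of _ "d*m"])
    then show ?thesis using dm by (intro mult_le_mono) auto
  qed
  finally show ?thesis unfolding n_def C_def .
next
  case False
  then have "m = 1 \<or> m = 2 \<or> m = 3" using d1 dm by auto
  then consider "d = 1" "m = 1" | "d = 1" "m = 2" | "d = 1" "m = 3" | "d = 2" "m = 2" | "d = 2" "m = 3" | "d = 3" "m = 3"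
    using d1 dm by fastforce
  then show ?thesis
  proof cases
    case 1 then show ?thesis unfolding 1 by simp
  next
    case 2 then show ?thesis unfolding 2 by (simp add: numeral_eq_Suc)
  next
    case 3 then show ?thesis unfolding 3 by simp
  next
    case 4
    have "(4::nat) choose 2 = 6" by (simp add: numeral_eq_Suc)
    then show ?thesis unfolding 4 by simp
  next
    case 5
    have "(5::nat) choose 2 = 10" by (simp add: numeral_eq_Suc)
    then show ?thesis unfolding 5 by simp
  next
    case 6
    have "(6::nat) choose 3 = 20" by (simp add: numeral_eq_Suc)
    then show ?thesis unfolding 6 by simp
  qed
qed


lemma small_eps_card_pos:
  fixes eps :: real
  assumes "0 < eps" "eps < 1 / (4 * real n ^ k * real N * real d * sqrt (real n))"
  shows "1 \<le> N"
  using assms by (cases N) auto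

lemma small_eps_bounds:
  fixes eps :: real
  assumes d1: "1 \<le> d" and dk: "d \<le> k" and n2: "2 \<le> n" and N1: "1 \<le> N" and eps0: "0 < eps"
    and eps: "eps < 1 / (4 * real n ^ k * real N * real d * sqrt (real n))"
  shows "eps * (4 * real n ^ k) < 1" and "eps * real N * 2^d * real d \<le> 1"
proof -
  define X where "X = 4 * real n ^ k * real N * real d * sqrt (real n)"
  have sq: "1 \<le> sqrt (real n)" using n2 by simp
  have npow: "1 \<le> real n ^ k" using n2 by simp
  have Xge: "4 * real n ^ k \<le> X"
  proof -
    have "4 * real n ^ k * 1 * 1 * 1 \<le> 4 * real n ^ k * real N * real d * sqrt (real n)"
      using N1 d1 sq npow by (intro mult_mono) auto
    then show ?thesis by (simp add: X_def)
  qed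
  have Xpos: "0 < X" using Xge npow by linarith
  have F: "eps * X < 1" using eps[folded X_def] Xpos by (simp add: less_divide_eq mult.commute)
  have "eps * (4 * real n ^ k) \<le> eps * X" using Xge eps0 by (intro mult_left_mono) auto
  then show "eps * (4 * real n ^ k) < 1" using F by simp
  have "(2::nat)^d \<le> n^d" using n2 by (rule power_mono) simp
  also have "n^d \<le> n^k" using n2 dk by (intro power_increasing) auto
  finally have pow2: "(2::real)^d \<le> real n ^ k" by (metis of_nat_le_iff of_nat_numeral of_nat_power)
  have "eps * real N * real d * 4 * 2^d \<le> eps * real N * real d * 4 * real n ^ k"
    using pow2 eps0 by (intro mult_left_mono) auto
  also have "\<dots> \<le> eps * X"
  proof -
    have "real N * real d * 4 * real n ^ k \<le> X" using sq npow N1 d1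
      unfolding X_def by (simp add: mult_ac)
    then show ?thesis using eps0 by (simp add: mult_left_mono mult.assoc)
  qed
  finally show "eps * real N * 2^d * real d \<le> 1" using F by (simp add: mult_ac)
qed

lemma small_eps_le_half_radius:
  fixes eps :: real
  assumes d2: "2 \<le> d" and dm: "d \<le> m" and eps0: "0 \<le> eps"
    and eps: "eps * (4 * real (d + m) ^ (d * m)) < 1"
  shows "eps \<le> half_radius d m / 8"
proof -
  define n where "n = d + m"
  define C where "C = n choose d"
  have n4: "4 \<le> n" using d2 dm by (simp add: n_def)
  have h16: "16 \<le> n^d"
  proof -
    have "(4::nat)^2 \<le> n^2" using n4 by (rule power_mono) simp
    also have "n^2 \<le> n^d" using d2 n4 by (intro power_increasing) auto
    finally show ?thesis by simp
  qed
  have hd: "d \<le> n^d"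
  proof -
    have "d \<le> n" by (simp add: n_def)
    also have "n \<le> n^d" using d2 n4 by (simp add: self_le_power)
    finally show ?thesis .
  qed
  have hC: "C \<le> n^d" unfolding C_def by (rule binomial_le_pow) (simp add: n_def)
  have hp: "n^d * n^d \<le> n^(d*m)"
  proof -
    have "n^d * n^d = n^(d*2)" by (simp add: power_add[symmetric] mult_2_right)
    also have "\<dots> \<le> n^(d*m)" using d2 dm n4 by (intro power_increasing) auto
    finally show ?thesis .
  qed
  have "16 * (d + C) \<le> 2 * (16 * n^d)" using hd hC by simp
  also have "\<dots> \<le> 2 * (n^d * n^d)" using h16 by simp
  also have "\<dots> \<le> 4 * n^(d*m)" using hp by simp
  finally have "16 * (d + C) \<le> 4 * n^(d*m)" .
  then have "real (16 * (d + C)) \<le> real (4 * n^(d*m))" by (rule of_nat_mono)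
  then have "eps * (16 * (real d + real C)) \<le> eps * (4 * real n ^ (d*m))"
    using eps0 by (intro mult_left_mono) auto
  then have "eps * (16 * (real d + real C)) < 1" using eps by (simp add: n_def)
  then have "eps < 1 / (16 * (real d + real C))" using d2 by (simp add: less_divide_eq)
  then show ?thesis unfolding half_radius_def C_def n_def by simp
qed

lemma small_eps_lipschitz_bound:
  fixes eps :: real
  assumes d1: "1 \<le> d" and dm: "d \<le> m" and n: "n = d + m" and N1: "1 \<le> N"
    and eps: "eps * real N * 2^d * real d \<le> 1"
  shows "real d * real (n choose d) + eps * real N * 2^d * real d
    \<le> 2 * real m * half_radius d m * (18 * real n ^ (d * m) * real N * real n) * (1 / (2 * real n))^d"
proof -
  define C where "C = n choose d"
  have n2: "2 \<le> n" using n d1 dm by simp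
  have "(real d * real C + eps * real N * 2^d * real d) * ((real d + real C) * (2 * real n)^d)
      \<le> (real d * real C + 1) * ((real d + real C) * (2 * real n)^d)"
    using eps n2 by (intro mult_right_mono) auto
  also have "\<dots> = real ((d * C + 1) * (d + C) * (2*n)^d)" by (simp add: algebra_simps)
  also have "\<dots> \<le> real (18 * m * n^(d*m+1))"
    using binomial_product_le_power[OF d1 dm] unfolding C_def n by (rule of_nat_mono)
  also have "\<dots> = 18 * real m * real n ^ (d*m) * real n" by simp
  also have "\<dots> \<le> 18 * real m * real n ^ (d*m) * real n * real N"
    using N1 mult_left_mono[of 1 "real N" "18 * real m * real n ^ (d*m) * real n"] by simp
  finally have L: "(real d * real C + eps * real N * 2^d * real d) * ((real d + real C) * (2 * real n)^d)
      \<le> 18 * real m * real n ^ (d*m) * real n * real N" .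
  have pos: "0 < (real d + real C) * (2 * real n)^d" using d1 n2 by simp
  have "2 * real m * half_radius d m * (18 * real n ^ (d * m) * real N * real n) * (1 / (2 * real n))^d
      = 18 * real m * real n ^ (d*m) * real n * real N / ((real d + real C) * (2 * real n)^d)"
    using pos unfolding half_radius_def n[symmetric] C_def by (simp add: power_one_over field_simps)
  then show ?thesis using L pos unfolding C_def by (simp add: le_divide_eq)
qed

lemma Max_esym_line_roots_diff_le_hdist:
  fixes Ms :: "'n::{finite,linorder} set set set" and s s' :: "'n set set \<Rightarrow> bool"
  assumes Mm: "\<forall>M\<in>Ms. is_matching d M" and d1: "1 \<le> d" and dm: "d \<le> m"
    and ndef: "n = CARD('n)" and mdef: "m = n - d"
    and cS: "card S = d" and M0: "M0 \<in> Ms" and uniq: "\<And>M. M \<in> Ms \<Longrightarrow> fully_crosses M S \<Longrightarrow> M = M0"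
    and eps0: "0 < eps" and eps2: "eps < 1/2" and epsb: "2 \<le> d \<Longrightarrow> eps \<le> half_radius d m / 8"
    and LK: "real d * real (n choose d) + eps * real (card Ms) * 2^d * real d
      \<le> 2 * real m * half_radius d m * K * (1 / (2 * real n))^d"
    and K: "0 < K"
    and c1: "c1 = eps * (if s M0 then qM M0 (ind_vec S) else 0)"
    and c2: "c2 = eps * (if s' M0 then qM M0 (ind_vec S) else 0)"
    and c12: "c1 < c2" and c21: "c2 - c1 \<le> eps" and ac1: "\<bar>c1\<bar> \<le> eps" and ac2: "\<bar>c2\<bar> \<le> eps"
    and ne1: "esym_line_roots d m c1 \<noteq> {}" and ne2: "esym_line_roots d m c2 \<noteq> {}"
  shows "Max (esym_line_roots d m c2) - Max (esym_line_roots d m c1)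
    \<le> hdist (hcone (ps d eps Ms s)) (hcone (ps d eps Ms s')) * K"
proof -
  define \<rho>1 where "\<rho>1 = Max (esym_line_roots d m c1)"
  define \<rho>2 where "\<rho>2 = Max (esym_line_roots d m c2)"
  define r where "r = (1 / (2 * real n))^d"
  define L where "L = real d * real (n choose d) + eps * real (card Ms) * 2^d * real d"
  have n: "n = d + m" and cm: "CARD('n) - d = m" using mdef dm d1 ndef by auto
  have n2: "2 \<le> n" using n d1 dm by simp
  have dn: "d \<le> CARD('n)" using n ndef by simp
  have c1h: "\<bar>c1\<bar> < 1/2" using ac1 eps2 by simp
  note r1 = Max_esym_line_roots[OF d1 dm c1h ne1, folded \<rho>1_def]
  have g1: "esym_line d m d \<rho>1 = c1" using r1(1) by (simp add: esym_line_roots_def)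
  have zs1: "{t. ps d eps Ms s (t *\<^sub>R all_ones + ind_vec S) = 0} = esym_line_roots d m c1"
    using zero_set_ps_ind_vec[OF Mm cS M0 uniq] unfolding cm c1 by simp
  define x where "x = \<rho>1 *\<^sub>R all_ones + ind_vec S"
  have xK: "x \<in> hcone (ps d eps Ms s)"
    using lambda_max_shift_in_hcone[of "ps d eps Ms s" "ind_vec S"] finite_esym_line_roots[of c1] c1h
    unfolding x_def \<rho>1_def lambda_max_def zs1 by simp
  have p2x: "ps d eps Ms s' x = c1 - c2"
    using ps_line_ind_vec[OF Mm cS M0 uniq, of eps s' \<rho>1] unfolding x_def cm c2[symmetric] g1 .
  define z where "z = (1 / (2 * real n)) *\<^sub>R x"
  have nz: "norm z \<le> 1/2"
    using norm_shift_ind_vec_le[of \<rho>1 S] r1(2,3) half_radius_pos[OF d1, of m]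
    unfolding z_def x_def ndef by simp
  have zK: "z \<in> cball 0 1 \<inter> hcone (ps d eps Ms s)"
    using hcone_scaleR[OF Mm d1 dn xK, of "1 / (2 * real n)"] n2 nz by (simp add: z_def)
  have pz: "ps d eps Ms s' z \<le> - (r * (c2 - c1))"
    using ps_homogeneous[OF Mm] p2x by (simp add: z_def r_def right_diff_distrib)
  have "real d * real (CARD('n) choose d) + eps * real (card Ms) * 2^d * real d \<le> L"
    by (simp add: L_def ndef)
  from infdist_hcone_ge[OF Mm d1 dn nz pz _ this] eps0
  have inf: "min (1/2) (r * (c2 - c1) / L) \<le> infdist z (hcone (ps d eps Ms s'))" by simp
  have "\<rho>2 - \<rho>1 \<le> (c2 - c1) / (2 * real m * half_radius d m)"
    using Max_esym_line_roots_gap(2)[OF d1 dm _ eps2 epsb c12 ac1 ac2 ne1 ne2] eps0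
    unfolding \<rho>1_def \<rho>2_def by simp
  also have "\<dots> \<le> K * min (1/2) (r * (c2 - c1) / L)"
  proof (rule divide_le_mult_min)
    have "1 \<le> real d" "1 \<le> real (n choose d)" using d1 n by (auto simp: Suc_leI)
    then have "1 \<le> real d * real (n choose d)" using mult_mono[of 1 "real d" 1] by simp
    moreover have "0 \<le> eps * real (card Ms) * 2^d * real d" using eps0 by simp
    ultimately show "1 \<le> L" unfolding L_def by linarith
    show "0 < 2 * real m * half_radius d m" using d1 dm half_radius_pos[OF d1, of m] by simp
    show "0 < r" "r \<le> 1" using n2 by (auto simp: r_def power_le_one)
  qed (use c12 c21 eps2 K LK in \<open>auto simp: L_def r_def\<close>)
  also have "\<dots> \<le> K * hdist (hcone (ps d eps Ms s)) (hcone (ps d eps Ms s'))"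
    using order_trans[OF inf infdist_le_hdist[OF zK zero_in_hcone[OF Mm d1 dn, of eps s']]] K
    by (intro mult_left_mono) auto
  finally show ?thesis unfolding \<rho>1_def \<rho>2_def by (simp add: mult.commute)
qed

lemma lambda_max_diff_le_hdist:
  fixes Ms :: "'n::{finite,linorder} set set set" and s s' :: "'n set set \<Rightarrow> bool"
  assumes Mm: "\<forall>M\<in>Ms. is_matching d M" and d1: "1 \<le> d" and dm: "d \<le> m"
    and ndef: "n = CARD('n)" and mdef: "m = n - d"
    and cS: "card S = d" and ex1: "\<exists>!M. M \<in> Ms \<and> fully_crosses M S"
    and hyp: "hyperbolic (ps d eps Ms s)" and hyp': "hyperbolic (ps d eps Ms s')"
    and eps0: "0 < eps" and eps2: "eps < 1/2" and epsb: "2 \<le> d \<Longrightarrow> eps \<le> half_radius d m / 8"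
    and LK: "real d * real (n choose d) + eps * real (card Ms) * 2^d * real d
      \<le> 2 * real m * half_radius d m * K * (1 / (2 * real n))^d"
    and K: "0 < K"
  shows "\<bar>lambda_max (ps d eps Ms s) (ind_vec S) - lambda_max (ps d eps Ms s') (ind_vec S)\<bar>
    \<le> hdist (hcone (ps d eps Ms s)) (hcone (ps d eps Ms s')) * K"
proof -
  obtain M0 where M0: "M0 \<in> Ms" "fully_crosses M0 S"
    and uniq: "\<And>M. M \<in> Ms \<Longrightarrow> fully_crosses M S \<Longrightarrow> M = M0"
    using ex1 by metis
  have cm: "CARD('n) - d = m" using ndef mdef by simp
  have dn: "d \<le> CARD('n)" using mdef dm ndef by simp
  define q where "q = qM M0 (ind_vec S)"
  have q: "\<bar>q\<bar> = 1" unfolding q_def using abs_qM_ind_vec_crossing Mm M0 by blast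
  define c where "c t = eps * (if t M0 then q else 0)" for t :: "'n set set \<Rightarrow> bool"
  have ac: "\<bar>c t\<bar> \<le> eps" for t using q eps0 by (auto simp: c_def abs_mult)
  have dc: "c t \<noteq> c t' \<Longrightarrow> \<bar>c t - c t'\<bar> = eps" for t t'
    using q eps0 by (auto simp: c_def abs_mult split: if_splits)
  have lam: "lambda_max (ps d eps Ms t) (ind_vec S) = Max (esym_line_roots d m (c t))" for t
    using zero_set_ps_ind_vec[OF Mm cS M0(1) uniq, of eps t] unfolding lambda_max_def cm c_def q_def by simp
  have ne: "esym_line_roots d m (c t) \<noteq> {}" if "hyperbolic (ps d eps Ms t)" for t
    using esym_line_roots_nonempty[OF that Mm cS M0(1) uniq d1] ac[of t] eps2
    unfolding c_def q_def cm by simp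
  have one_sided: "Max (esym_line_roots d m (c t')) - Max (esym_line_roots d m (c t))
      \<le> hdist (hcone (ps d eps Ms t)) (hcone (ps d eps Ms t')) * K"
    if "c t < c t'" "hyperbolic (ps d eps Ms t)" "hyperbolic (ps d eps Ms t')" for t t'
  proof -
    have "c t' - c t \<le> eps" using dc[of t' t] that(1) by fastforce
    then show ?thesis
      using Max_esym_line_roots_diff_le_hdist[where s=t and s'=t', OF Mm d1 dm ndef mdef cS M0(1) uniq
          eps0 eps2 epsb LK K c_def[of t, unfolded q_def] c_def[of t', unfolded q_def] that(1) _
          ac[of t] ac[of t'] ne[OF that(2)] ne[OF that(3)]]
      by simp
  qed
  have hd0: "0 \<le> hdist (hcone (ps d eps Ms s)) (hcone (ps d eps Ms s'))"
    by (rule hdist_nonneg[OF zero_in_hcone[OF Mm d1 dn] zero_in_hcone[OF Mm d1 dn]])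
  consider "c s = c s'" | "c s < c s'" | "c s' < c s" by linarith
  then show ?thesis
  proof cases
    case 1
    then show ?thesis using hd0 K unfolding lam by simp
  next
    case 2
    then show ?thesis using one_sided[OF 2 hyp hyp'] Max_esym_line_roots_gap(1)[OF d1 dm _ eps2 epsb 2 ac ac ne[OF hyp] ne[OF hyp']] eps0
      unfolding lam by simp
  next
    case 3
    then show ?thesis using one_sided[OF 3 hyp' hyp] Max_esym_line_roots_gap(1)[OF d1 dm _ eps2 epsb 3 ac ac ne[OF hyp'] ne[OF hyp]] eps0
      unfolding lam hdist_commute[of "hcone (ps d eps Ms s')"] by simp
  qed
qed

theorem lemma9:
  fixes d :: nat and eps :: real
    and Ms :: "('n::{finite,linorder}) set set set" and Ss :: "'n set set"
    and s s' :: "'n set set \<Rightarrow> bool"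
  defines "n \<equiv> CARD('n)" and "N \<equiv> card Ms"
  assumes "1 \<le> d" and "2 * d \<le> n"
    and "\<forall>M\<in>Ms. is_matching d M"
    and "\<forall>S\<in>Ss. card S = d"
    and "\<forall>S\<in>Ss. \<exists>!M. M \<in> Ms \<and> fully_crosses M S"
    and "\<forall>M\<in>Ms. \<exists>S\<in>Ss. fully_crosses M S"
    and "hyperbolic (ps d eps Ms s)" and "hyperbolic (ps d eps Ms s')"
    and "0 < eps"
    and "eps < 1 / (4 * real n ^ (d * (n - d)) * real N * real d * sqrt (real n))"
  shows "hdist (hcone (ps d eps Ms s)) (hcone (ps d eps Ms s'))
           \<ge> Lambda_dist Ss (ps d eps Ms s) (ps d eps Ms s')
              / (18 * real n ^ (d * (n - d)) * real N * real n)"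
proof -
  note d1 = assms(3) and Mm = assms(5) and eps0 = assms(11)
  define m where "m = n - d"
  define K where "K = 18 * real n ^ (d * m) * real N * real n"
  let ?K1 = "hcone (ps d eps Ms s)" and ?K2 = "hcone (ps d eps Ms s')"
  have dm: "d \<le> m" and n: "n = d + m" and n2: "2 \<le> n" and dk: "d \<le> d * m"
    using assms(3,4) by (auto simp: m_def)
  have eps: "eps < 1 / (4 * real n ^ (d * m) * real N * real d * sqrt (real n))"
    using assms(12) by (simp add: m_def)
  have N1: "1 \<le> N" by (rule small_eps_card_pos[OF eps0 eps])
  note small = small_eps_bounds[OF d1 dk n2 N1 eps0 eps]
  have "eps * 4 \<le> eps * (4 * real n ^ (d * m))"
    using eps0 n2 by (intro mult_left_mono) (auto simp: one_le_power)
  then have eps2: "eps < 1/2" using small(1) by simp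
  have epsb: "eps \<le> half_radius d m / 8" if "2 \<le> d"
    using small_eps_le_half_radius[OF that dm _ small(1)[unfolded n]] eps0 by simp
  have LK: "real d * real (n choose d) + eps * real (card Ms) * 2^d * real d
      \<le> 2 * real m * half_radius d m * K * (1 / (2 * real n))^d"
    using small_eps_lipschitz_bound[OF d1 dm n N1 small(2)] unfolding K_def N_def .
  have K: "0 < K" using n2 N1 by (simp add: K_def)
  have "0 \<le> hdist ?K1 ?K2 * K"
    using hdist_nonneg[OF zero_in_hcone[OF Mm d1] zero_in_hcone[OF Mm d1]] K n by (simp add: n_def)
  moreover have "\<bar>lambda_max (ps d eps Ms s) (ind_vec S) - lambda_max (ps d eps Ms s') (ind_vec S)\<bar>
      \<le> hdist ?K1 ?K2 * K" if "S \<in> Ss" for S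
    using assms(6,7) that
    by (intro lambda_max_diff_le_hdist[OF Mm d1 dm n_def[THEN meta_eq_to_obj_eq] m_def _ _ assms(9,10)
        eps0 eps2 epsb LK K]) auto
  ultimately have "Lambda_dist Ss (ps d eps Ms s) (ps d eps Ms s') \<le> hdist ?K1 ?K2 * K"
    unfolding Lambda_dist_def by (intro Max.boundedI) auto
  then show ?thesis using K by (simp add: K_def m_def divide_le_eq)
qed

end
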